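(* Assume $\beta>1$ and $0<\omega_i^{\min}\le\omega_i^k\le\omega_i^{\max}<\infty$ ($i\le N-1$), $0<\nu_i^{\min}\le\nu_i^k\le\nu_i^{\max}<\infty$ ($i\le N-2$) for all $k\ge0$. Then there exists $C_2>0$ such that the iterates $X^k$ of the 2-splitting proximal point ADMM satisfy the relative error condition $$\|\nabla\mathcal{L}_\beta^{2s}(X^k)\|_F\le C_2\|X^k-X^{k-1}\|_F\quad\text{for all }k\ge1,$$ where $\nabla$ is the gradient with respect to all blocks $(\{W_i\},\{V_i\},\Lambda)$.
   Context: Data $X\in\mathbb{R}^{d\times n}$, $Y\in\mathbb{R}^{q\times n}$, integer $N\ge3$, parameters $\lambda,\mu>0$, $\beta>0$. Activations $\sigma_i:\mathbb{R}\to\mathbb{R}$ ($i\le N-1$) real analytic with $|\sigma_i|\le\psi_0,|\sigma_i'|\le\psi_1,|\sigma_i''|\le\psi_2$ on $\mathbb{R}$, applied entrywise to matrices. $\|\cdot\|_F$ Frobenius norm, $\langle A,B\rangle=\mathrm{tr}(AB^T)$. $V_0:=X$ always. Variables $W_i\in\mathbb{R}^{d\times d}$ ($i\le N-1$), $W_N\in\mathbb{R}^{q\times d}$, $V_i\in\mathbb{R}^{d\times n}$ ($1\le i\le N-1$), $V_N,\Lambda\in\mathbb{R}^{q\times n}$. Augmented Lagrangian: $\mathcal{L}_\beta^{2s}(\{W_i\},\{V_i\},\Lambda)=\tfrac12\|V_N-Y\|_F^2+\tfrac\lambda2\sum_{i=1}^N\|W_i\|_F^2+\tfrac\mu2\sum_{i=1}^{N-1}\|V_{i-1}+\sigma_i(W_iV_{i-1})-V_i\|_F^2+\langle\Lambda,W_NV_{N-1}-V_N\rangle+\tfrac\beta2\|W_NV_{N-1}-V_N\|_F^2$.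 2-splitting proximal point ADMM: given arbitrary $W_i^0$, set $V_i^0=V_{i-1}^0+\sigma_i(W_i^0V_{i-1}^0)$ ($i\le N-1$), $V_N^0=W_N^0V_{N-1}^0$, $\Lambda^0=O$, and positive parameters $\omega_i^{k}$ ($i\le N-1$), $\nu_i^{k}$ ($i\le N-2$). For $k\ge1$: (a) $W_N^k=\arg\min_{W_N}\{\tfrac\lambda2\|W_N\|_F^2+\tfrac\beta2\|W_NV_{N-1}^{k-1}-V_N^{k-1}+\Lambda^{k-1}/\beta\|_F^2\}$; (b) for $i=N-1,\dots,1$: $W_i^k$ is a (fixed) minimizer of $\tfrac\lambda2\|W_i\|_F^2+\tfrac\mu2\|V_{i-1}^{k-1}+\sigma_i(W_iV_{i-1}^{k-1})-V_i^{k-1}\|_F^2+\tfrac{\omega_i^{k-1}}2\|W_i-W_i^{k-1}\|_F^2$; (c) for $i=1,\dots,N-2$: $V_i^k$ is a (fixed) minimizer of $\tfrac\mu2\|V_{i-1}^k+\sigma_i(W_i^kV_{i-1}^k)-V_i\|_F^2+\tfrac\mu2\|V_i+\sigma_{i+1}(W_{i+1}^kV_i)-V_{i+1}^{k-1}\|_F^2+\tfrac{\nu_i^{k-1}}2\|V_i-V_i^{k-1}\|_F^2$; (d) $V_{N-1}^k=\arg\min\{\tfrac\mu2\|V_{N-2}^k+\sigma_{N-1}(W_{N-1}^kV_{N-2}^k)-V_{N-1}\|_F^2+\tfrac\beta2\|W_N^kV_{N-1}-V_N^{k-1}+\Lambda^{k-1}/\beta\|_F^2\}$; (e) $V_N^k=\frac{1}{1+\beta}(Y+\beta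 W_N^kV_{N-1}^k+\Lambda^{k-1})$; (f) $\Lambda^k=\Lambda^{k-1}+\beta(W_N^kV_{N-1}^k-V_N^k)$. $X^k:=(\{W_i^k\}_{i=1}^N,\{V_i^k\}_{i=1}^N,\Lambda^k)$ and $\|X^k-X^{k-1}\|_F^2:=\sum_i\|W_i^k-W_i^{k-1}\|_F^2+\sum_i\|V_i^k-V_i^{k-1}\|_F^2+\|\Lambda^k-\Lambda^{k-1}\|_F^2$. *)

theory Defs
  imports "HOL-Analysis.Analysis"
begin

text \<open>Matrices with r rows and c columns are elements of real^'c^'r.
  The norm on this type is the Frobenius norm, the inner product is tr(A B^T),
  and ** is matrix multiplication.\<close>

definition real_analytic :: "(real \<Rightarrow> real) \<Rightarrow> bool" where
  "real_analytic f \<longleftrightarrow>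
     (\<forall>x. \<exists>r>0. \<exists>a::nat \<Rightarrow> real. \<forall>y. \<bar>y - x\<bar> < r \<longrightarrow> (\<lambda>n. a n * (y - x) ^ n) sums f y)"

definition ew :: "(real \<Rightarrow> real) \<Rightarrow> real^'c^'r \<Rightarrow> real^'c^'r" where
  "ew f A = (\<chi> i j. f (A $ i $ j))"

definition Vx :: "real^'n^'d \<Rightarrow> (nat \<Rightarrow> real^'n^'d) \<Rightarrow> nat \<Rightarrow> real^'n^'d" where
  "Vx X V i = (if i = 0 then X else V i)"

text \<open>Augmented Lagrangian L_beta^{2s}.  W i (1 \<le> i \<le> N-1), WN = W_N,
  V i (1 \<le> i \<le> N-1), VN = V_N, Lam = Lambda.\<close>
definition lagr ::
  "real^'n^'d \<Rightarrow> real^'n^'q \<Rightarrow> nat \<Rightarrow> real \<Rightarrow> real \<Rightarrow> real \<Rightarrow> (nat \<Rightarrow> real \<Rightarrow> real) \<Rightarrow>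
   (nat \<Rightarrow> real^'d^'d) \<Rightarrow> real^'d^'q \<Rightarrow> (nat \<Rightarrow> real^'n^'d) \<Rightarrow> real^'n^'q \<Rightarrow> real^'n^'q \<Rightarrow> real" where
  "lagr X Y N lam mu beta sig W WN V VN Lam =
     (1/2) * (norm (VN - Y))\<^sup>2
     + lam / 2 * ((\<Sum>i=1..N-1. (norm (W i))\<^sup>2) + (norm WN)\<^sup>2)
     + mu / 2 * (\<Sum>i=1..N-1. (norm (Vx X V (i-1) + ew (sig i) (W i ** Vx X V (i-1)) - V i))\<^sup>2)
     + inner Lam (WN ** V (N-1) - VN)
     + beta / 2 * (norm (WN ** V (N-1) - VN))\<^sup>2"

definition grad_of :: "('a::real_inner \<Rightarrow> real) \<Rightarrow> 'a \<Rightarrow> 'a" where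
  "grad_of f x = (SOME D. GDERIV f x :> D)"

text \<open>Frobenius norm of the full gradient of L w.r.t. all blocks, written out
  blockwise (the full gradient is the tuple of the block-partial gradients).\<close>
definition lagr_grad_norm ::
  "real^'n^'d \<Rightarrow> real^'n^'q \<Rightarrow> nat \<Rightarrow> real \<Rightarrow> real \<Rightarrow> real \<Rightarrow> (nat \<Rightarrow> real \<Rightarrow> real) \<Rightarrow>
   (nat \<Rightarrow> real^'d^'d) \<Rightarrow> real^'d^'q \<Rightarrow> (nat \<Rightarrow> real^'n^'d) \<Rightarrow> real^'n^'q \<Rightarrow> real^'n^'q \<Rightarrow> real" where
  "lagr_grad_norm X Y N lam mu beta sig W WN V VN Lam = sqrt (
       (\<Sum>i=1..N-1. (norm (grad_of (\<lambda>Z. lagr X Y N lam mu beta sig (W(i := Z)) WN V VN Lam) (W i)))\<^sup>2)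
     + (norm (grad_of (\<lambda>Z. lagr X Y N lam mu beta sig W Z V VN Lam) WN))\<^sup>2
     + (\<Sum>i=1..N-1. (norm (grad_of (\<lambda>Z. lagr X Y N lam mu beta sig W WN (V(i := Z)) VN Lam) (V i)))\<^sup>2)
     + (norm (grad_of (\<lambda>Z. lagr X Y N lam mu beta sig W WN V Z Lam) VN))\<^sup>2
     + (norm (grad_of (\<lambda>Z. lagr X Y N lam mu beta sig W WN V VN Z) Lam))\<^sup>2)"

text \<open>The sequences (indexed by k first, then block index i) are iterates of the
  2-splitting proximal point ADMM with proximal parameters om i k, nu i k.\<close>
definition admm2s_iterates ::
  "real^'n^'d \<Rightarrow> real^'n^'q \<Rightarrow> nat \<Rightarrow> real \<Rightarrow> real \<Rightarrow> real \<Rightarrow> (nat \<Rightarrow> real \<Rightarrow> real) \<Rightarrow>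
   (nat \<Rightarrow> nat \<Rightarrow> real) \<Rightarrow> (nat \<Rightarrow> nat \<Rightarrow> real) \<Rightarrow>
   (nat \<Rightarrow> nat \<Rightarrow> real^'d^'d) \<Rightarrow> (nat \<Rightarrow> real^'d^'q) \<Rightarrow> (nat \<Rightarrow> nat \<Rightarrow> real^'n^'d) \<Rightarrow>
   (nat \<Rightarrow> real^'n^'q) \<Rightarrow> (nat \<Rightarrow> real^'n^'q) \<Rightarrow> bool" where
  "admm2s_iterates X Y N lam mu beta sig om nu W WN V VN Lam \<longleftrightarrow>
     \<comment> \<open>initialization\<close>
     (\<forall>i\<in>{1..N-1}. V 0 i = Vx X (V 0) (i-1) + ew (sig i) (W 0 i ** Vx X (V 0) (i-1)))
   \<and> VN 0 = WN 0 ** V 0 (N-1)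
   \<and> Lam 0 = 0
   \<and> (\<forall>k\<ge>1.
     \<comment> \<open>(a)\<close>
       (\<forall>Z. lam/2 * (norm (WN k))\<^sup>2 + beta/2 * (norm (WN k ** V (k-1) (N-1) - VN (k-1) + (1/beta) *\<^sub>R Lam (k-1)))\<^sup>2
          \<le> lam/2 * (norm Z)\<^sup>2 + beta/2 * (norm (Z ** V (k-1) (N-1) - VN (k-1) + (1/beta) *\<^sub>R Lam (k-1)))\<^sup>2)
     \<comment> \<open>(b)\<close>
     \<and> (\<forall>i\<in>{1..N-1}. \<forall>Z.
          lam/2 * (norm (W k i))\<^sup>2
          + mu/2 * (norm (Vx X (V (k-1)) (i-1) + ew (sig i) (W k i ** Vx X (V (k-1)) (i-1)) - V (k-1) i))\<^sup>2
          + om i (k-1) / 2 * (norm (W k i - W (k-1) i))\<^sup>2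
        \<le> lam/2 * (norm Z)\<^sup>2
          + mu/2 * (norm (Vx X (V (k-1)) (i-1) + ew (sig i) (Z ** Vx X (V (k-1)) (i-1)) - V (k-1) i))\<^sup>2
          + om i (k-1) / 2 * (norm (Z - W (k-1) i))\<^sup>2)
     \<comment> \<open>(c)\<close>
     \<and> (\<forall>i\<in>{1..N-2}. \<forall>Z.
          mu/2 * (norm (Vx X (V k) (i-1) + ew (sig i) (W k i ** Vx X (V k) (i-1)) - V k i))\<^sup>2
          + mu/2 * (norm (V k i + ew (sig (i+1)) (W k (i+1) ** V k i) - V (k-1) (i+1)))\<^sup>2
          + nu i (k-1) / 2 * (norm (V k i - V (k-1) i))\<^sup>2
        \<le> mu/2 * (norm (Vx X (V k) (i-1) + ew (sig i) (W k i ** Vx X (V k) (i-1)) - Z))\<^sup>2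
          + mu/2 * (norm (Z + ew (sig (i+1)) (W k (i+1) ** Z) - V (k-1) (i+1)))\<^sup>2
          + nu i (k-1) / 2 * (norm (Z - V (k-1) i))\<^sup>2)
     \<comment> \<open>(d)\<close>
     \<and> (\<forall>Z.
          mu/2 * (norm (Vx X (V k) (N-2) + ew (sig (N-1)) (W k (N-1) ** Vx X (V k) (N-2)) - V k (N-1)))\<^sup>2
          + beta/2 * (norm (WN k ** V k (N-1) - VN (k-1) + (1/beta) *\<^sub>R Lam (k-1)))\<^sup>2
        \<le> mu/2 * (norm (Vx X (V k) (N-2) + ew (sig (N-1)) (W k (N-1) ** Vx X (V k) (N-2)) - Z))\<^sup>2
          + beta/2 * (norm (WN k ** Z - VN (k-1) + (1/beta) *\<^sub>R Lam (k-1)))\<^sup>2)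
     \<comment> \<open>(e)\<close>
     \<and> VN k = (1/(1+beta)) *\<^sub>R (Y + beta *\<^sub>R (WN k ** V k (N-1)) + Lam (k-1))
     \<comment> \<open>(f)\<close>
     \<and> Lam k = Lam (k-1) + beta *\<^sub>R (WN k ** V k (N-1) - VN k))"

definition iter_diff_norm ::
  "nat \<Rightarrow> (nat \<Rightarrow> nat \<Rightarrow> real^'d^'d) \<Rightarrow> (nat \<Rightarrow> real^'d^'q) \<Rightarrow> (nat \<Rightarrow> nat \<Rightarrow> real^'n^'d) \<Rightarrow>
   (nat \<Rightarrow> real^'n^'q) \<Rightarrow> (nat \<Rightarrow> real^'n^'q) \<Rightarrow> nat \<Rightarrow> real" where
  "iter_diff_norm N W WN V VN Lam k = sqrt (
       (\<Sum>i=1..N-1. (norm (W k i - W (k-1) i))\<^sup>2) + (norm (WN k - WN (k-1)))\<^sup>2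
     + (\<Sum>i=1..N-1. (norm (V k i - V (k-1) i))\<^sup>2) + (norm (VN k - VN (k-1)))\<^sup>2
     + (norm (Lam k - Lam (k-1)))\<^sup>2)"

end

theory Submission
  imports Defs
begin

text \<open>
  From the second iteration on the augmented Lagrangian decreases along the iterates: every
  primal block step is a (proximal) minimisation, the output step minimises a quadratic of
  modulus 1 + beta exactly, and steps (e), (f) force Lam k = VN k - Y, so the multiplier
  increase norm (Lam k - Lam (k-1))^2 / beta is paid for by the output step as soon as beta > 1.
  For beta > 1 the Lagrangian also dominates the norms of the weights, of the multiplier and of
  the layer residuals, hence all iterates stay in a bounded set.  On that set, the first-order
  condition of each block subproblem writes the corresponding block gradient of the Lagrangian at
  the new iterate as a difference of derivatives of smooth terms at consecutive iterates, plus the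
  proximal term; bounded first and second derivatives of the activations make these differences
  Lipschitz, and summing over the blocks gives the relative error bound.
\<close>

section \<open>Frobenius norm of matrices\<close>

lemma norm_matrix_power2:
  fixes A :: "real^'c^'r"
  shows "(norm A)\<^sup>2 = (\<Sum>i\<in>UNIV. \<Sum>j\<in>UNIV. (A$i$j)\<^sup>2)"
  unfolding power2_norm_eq_inner by (simp add: inner_vec_def power2_eq_square)

lemma abs_matrix_entry_le_norm:
  fixes A :: "real^'c^'r"
  shows "\<bar>A$i$j\<bar> \<le> norm A"
  by (rule order_trans[OF component_le_norm_cart Finite_Cartesian_Product.norm_nth_le])

lemma norm_matrix_mult_le:
  fixes A :: "real^'k^'r" and B :: "real^'c^'k"
  shows "norm (A ** B) \<le> norm A * norm B"
proof -
  have "(norm (A ** B))\<^sup>2 = (\<Sum>i\<in>UNIV. \<Sum>j\<in>UNIV. (\<Sum>k\<in>UNIV. A$i$k * B$k$j)\<^sup>2)"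
    by (simp add: norm_matrix_power2 matrix_matrix_mult_def)
  also have "\<dots> \<le> (\<Sum>i\<in>UNIV. \<Sum>j\<in>UNIV. (\<Sum>k\<in>UNIV. (A$i$k)\<^sup>2) * (\<Sum>k\<in>UNIV. (B$k$j)\<^sup>2))"
    by (intro sum_mono Cauchy_Schwarz_ineq_sum)
  also have "\<dots> = (\<Sum>i\<in>UNIV. \<Sum>k\<in>UNIV. (A$i$k)\<^sup>2) * (\<Sum>j\<in>UNIV. \<Sum>k\<in>UNIV. (B$k$j)\<^sup>2)"
    by (rule sum_product[symmetric])
  also have "\<dots> = (norm A)\<^sup>2 * (norm B)\<^sup>2"
    by (simp only: norm_matrix_power2 sum.swap[of "\<lambda>j k. (B$k$j)\<^sup>2" UNIV UNIV])
  finally have "(norm (A ** B))\<^sup>2 \<le> (norm A * norm B)\<^sup>2" by (simp add: power_mult_distrib)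
  then show ?thesis by (rule power2_le_imp_le) simp
qed

lemma norm_matrix_mult_le_mult:
  fixes A :: "real^'k^'r" and B :: "real^'c^'k"
  assumes "norm A \<le> a" and "norm B \<le> b"
  shows "norm (A ** B) \<le> a * b"
proof -
  have "0 \<le> a" using assms(1) norm_ge_zero order_trans by blast
  then show ?thesis
    using norm_matrix_mult_le[of A B] mult_mono[OF assms] by (meson norm_ge_zero order_trans)
qed

lemma norm_matrix_scale_entries_le:
  fixes H :: "real^'c^'r"
  assumes "\<And>i j. \<bar>c i j\<bar> \<le> M"
  shows "norm (\<chi> i j. c i j * H$i$j) \<le> M * norm H"
proof -
  have M: "M \<ge> 0" using assms[of undefined undefined] by simp
  have "(norm (\<chi> i j. c i j * H$i$j))\<^sup>2 = (\<Sum>i\<in>UNIV. \<Sum>j\<in>UNIV. (c i j)\<^sup>2 * (H$i$j)\<^sup>2)"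
    unfolding norm_matrix_power2 by (simp only: vec_lambda_beta power_mult_distrib)
  also have "\<dots> \<le> (\<Sum>i\<in>UNIV. \<Sum>j\<in>UNIV. M\<^sup>2 * (H$i$j)\<^sup>2)"
  proof (intro sum_mono mult_right_mono)
    fix i j
    have "\<bar>c i j\<bar> \<le> \<bar>M\<bar>" using assms[of i j] by linarith
    then show "(c i j)\<^sup>2 \<le> M\<^sup>2" by (simp add: abs_le_square_iff)
  qed simp
  also have "\<dots> = (M * norm H)\<^sup>2"
    unfolding norm_matrix_power2 power_mult_distrib by (simp only: sum_distrib_left)
  finally show ?thesis by (rule power2_le_imp_le) (use M in simp)
qed

lemma matrix_eq_sum_axis:
  fixes g :: "'r::finite \<Rightarrow> 'c::finite \<Rightarrow> real"
  shows "(\<chi> i j. g i j) = (\<Sum>i\<in>UNIV. \<Sum>j\<in>UNIV. g i j *\<^sub>R axis i (axis j 1))"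
proof -
  have axis_entry: "(axis i (axis j (1::real)) :: real^'c^'r) $ a $ b = (if a = i \<and> b = j then 1 else 0)"
    for i a :: 'r and j b :: 'c
    by (simp add: axis_def)
  have "(\<Sum>i\<in>UNIV. \<Sum>j\<in>UNIV. g i j *\<^sub>R axis i (axis j 1)) $ a $ b = g a b" for a b
  proof -
    have "(\<Sum>i\<in>UNIV. \<Sum>j\<in>UNIV. g i j *\<^sub>R axis i (axis j (1::real))) $ a $ b
        = (\<Sum>i\<in>UNIV. \<Sum>j\<in>UNIV. if a = i \<and> b = j then g i j else 0)"
      by (simp add: sum_component axis_entry if_distrib[of "\<lambda>x. g _ _ * x"] cong: if_cong)
    also have "\<dots> = g a b"
    proof -
      have "(\<Sum>j\<in>UNIV. if a = i \<and> b = j then g i j else 0) = (if a = i then g i b else 0)" for i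
        by (cases "a = i") simp_all
      then show ?thesis by simp
    qed
    finally show ?thesis .
  qed
  then show ?thesis by (simp add: vec_eq_iff)
qed

lemma matrix_add_rdistrib:
  fixes B C :: "real^'k^'r" and A :: "real^'p^'k"
  shows "(B + C) ** A = B ** A + C ** A"
  by (simp add: matrix_matrix_mult_def vec_eq_iff sum.distrib distrib_right)

lemma bounded_linear_matrix_mult_right: "bounded_linear (\<lambda>Z::real^'k^'r. Z ** (A::real^'c^'k))"
  unfolding linear_conv_bounded_linear[symmetric]
  by (rule linearI) (simp_all add: matrix_add_rdistrib scalar_matrix_assoc)

lemma bounded_linear_matrix_mult_left: "bounded_linear (\<lambda>Z::real^'c^'k. (M::real^'k^'r) ** Z)"
  unfolding linear_conv_bounded_linear[symmetric]
  by (rule linearI) (simp_all add: matrix_add_ldistrib matrix_scalar_ac scalar_matrix_assoc)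

lemma matrix_diff_ldistrib:
  fixes B C :: "real^'p^'k" and A :: "real^'k^'r"
  shows "A ** (B - C) = A ** B - A ** C"
  by (rule linear_diff[OF bounded_linear.linear[OF bounded_linear_matrix_mult_left]])

definition ew_deriv :: "(real \<Rightarrow> real) \<Rightarrow> real^'c^'r \<Rightarrow> real^'c^'r \<Rightarrow> real^'c^'r" where
  "ew_deriv f A H = (\<chi> i j. deriv f (A$i$j) * H$i$j)"

lemma has_derivative_ew:
  fixes A :: "real^'c^'r"
  assumes "\<And>x. (f has_real_derivative deriv f x) (at x)"
  shows "(ew f has_derivative ew_deriv f A) (at A)"
proof -
  have ew_sum: "ew f = (\<lambda>B::real^'c^'r. \<Sum>i\<in>UNIV. \<Sum>j\<in>UNIV. f (B$i$j) *\<^sub>R axis i (axis j 1))"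
    by (rule ext) (simp only: ew_def matrix_eq_sum_axis)
  have ew_deriv_sum: "ew_deriv f A =
      (\<lambda>H::real^'c^'r. \<Sum>i\<in>UNIV. \<Sum>j\<in>UNIV. (deriv f (A$i$j) * H$i$j) *\<^sub>R axis i (axis j 1))"
    unfolding ew_deriv_def by (rule ext) (rule matrix_eq_sum_axis)
  have entry: "((\<lambda>B::real^'c^'r. f (B$i$j)) has_derivative (\<lambda>H. deriv f (A$i$j) * H$i$j)) (at A)"
    for i j
  proof -
    have "bounded_linear (\<lambda>B::real^'c^'r. B$i$j)"
      using bounded_linear_compose[OF bounded_linear_vec_nth[of j] bounded_linear_vec_nth[of i]] by simp
    then have "((\<lambda>B::real^'c^'r. B$i$j) has_derivative (\<lambda>H. H$i$j)) (at A)"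
      by (rule bounded_linear_imp_has_derivative)
    moreover have "(f has_derivative (\<lambda>h. h * deriv f (A$i$j))) (at (A$i$j))"
      using assms[of "A$i$j"] by (simp add: has_field_derivative_def mult_commute_abs)
    ultimately show ?thesis using has_derivative_compose by (fastforce simp: mult.commute)
  qed
  show ?thesis
    unfolding ew_sum ew_deriv_sum
    by (intro has_derivative_sum bounded_linear.has_derivative[OF bounded_linear_scaleR_left] entry)
qed

lemma norm_ew_le:
  fixes A :: "real^'c^'r"
  assumes "\<And>x. \<bar>s x\<bar> \<le> p0"
  shows "norm (ew s A) \<le> real (CARD('r) * CARD('c)) * p0"
proof -
  have p0: "p0 \<ge> 0" using assms[of 0] by simp
  have "(norm (ew s A))\<^sup>2 = (\<Sum>i\<in>UNIV. \<Sum>j\<in>UNIV. (s (A$i$j))\<^sup>2)"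
    by (simp add: norm_matrix_power2 ew_def)
  also have "\<dots> \<le> (\<Sum>i\<in>(UNIV::'r set). \<Sum>j\<in>(UNIV::'c set). p0\<^sup>2)"
  proof (intro sum_mono)
    fix i j
    have "\<bar>s (A$i$j)\<bar> \<le> \<bar>p0\<bar>" using assms[of "A$i$j"] by linarith
    then show "(s (A$i$j))\<^sup>2 \<le> p0\<^sup>2" by (simp add: abs_le_square_iff)
  qed
  also have "\<dots> = real (CARD('r) * CARD('c)) * p0\<^sup>2" by simp
  also have "\<dots> \<le> (real (CARD('r) * CARD('c)) * p0)\<^sup>2"
  proof -
    have "1 \<le> real (CARD('r) * CARD('c))"
      using mult_mono[of 1 "real CARD('r)" 1 "real CARD('c)"] by (simp add: Suc_le_eq)
    then have "real (CARD('r) * CARD('c)) \<le> (real (CARD('r) * CARD('c)))\<^sup>2"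
      by (simp add: power2_eq_square)
    then show ?thesis by (simp add: power_mult_distrib mult_right_mono)
  qed
  finally show ?thesis by (rule power2_le_imp_le) (use p0 in simp)
qed

lemma norm_ew_diff_le:
  assumes "\<And>x y. \<bar>s x - s y\<bar> \<le> p1 * \<bar>x - y\<bar>" and "p1 \<ge> 0"
  shows "norm (ew s A - ew s B) \<le> p1 * norm (A - B)"
proof -
  \<comment> \<open>write the difference as the entrywise product of A - B with difference quotients\<close>
  define c where "c i j = (if A$i$j = B$i$j then 0 else (s (A$i$j) - s (B$i$j)) / (A$i$j - B$i$j))" for i j
  have "ew s A - ew s B = (\<chi> i j. c i j * (A - B)$i$j)"
    by (simp add: ew_def c_def vec_eq_iff)
  moreover have "\<bar>c i j\<bar> \<le> p1" for i j
    using assms(1)[of "A$i$j" "B$i$j"] assms(2) by (simp add: c_def abs_divide divide_le_eq)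
  ultimately show ?thesis using norm_matrix_scale_entries_le[of c p1 "A - B"] by (simp only:)
qed

lemma norm_ew_deriv_le:
  assumes "\<And>x. \<bar>deriv s x\<bar> \<le> p1"
  shows "norm (ew_deriv s A H) \<le> p1 * norm H"
  unfolding ew_deriv_def by (rule norm_matrix_scale_entries_le) (rule assms)

lemma ew_deriv_diff: "ew_deriv s A H1 - ew_deriv s A H2 = ew_deriv s A (H1 - H2)"
  by (simp add: ew_deriv_def vec_eq_iff algebra_simps)

lemma norm_ew_deriv_diff_le:
  assumes "\<And>x y. \<bar>deriv s x - deriv s y\<bar> \<le> p2 * \<bar>x - y\<bar>" and "p2 \<ge> 0"
  shows "norm (ew_deriv s A H - ew_deriv s B H) \<le> p2 * norm (A - B) * norm H"
proof -
  have "ew_deriv s A H - ew_deriv s B H = (\<chi> i j. (deriv s (A$i$j) - deriv s (B$i$j)) * H$i$j)"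
    by (simp add: ew_deriv_def vec_eq_iff algebra_simps)
  moreover have "\<bar>deriv s (A$i$j) - deriv s (B$i$j)\<bar> \<le> p2 * norm (A - B)" for i j
    using abs_matrix_entry_le_norm[of "A - B" i j]
    by (intro order_trans[OF assms(1) mult_left_mono[OF _ assms(2)]]) simp
  ultimately show ?thesis by (simp add: norm_matrix_scale_entries_le)
qed

lemma has_derivative_scaled_norm_power2:
  fixes g :: "'a::real_normed_vector \<Rightarrow> 'b::real_inner"
  assumes "(g has_derivative g') (at x)"
  shows "((\<lambda>z. c/2 * (norm (g z))\<^sup>2) has_derivative (\<lambda>h. c * inner (g x) (g' h))) (at x)"
proof -
  have "((\<lambda>z. inner (g z) (g z)) has_derivative (\<lambda>h. inner (g x) (g' h) + inner (g' h) (g x))) (at x)"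
    by (rule has_derivative_inner[OF assms assms])
  then have "((\<lambda>z. (norm (g z))\<^sup>2) has_derivative (\<lambda>h. 2 * inner (g x) (g' h))) (at x)"
    by (simp add: power2_norm_eq_inner inner_commute)
  then show ?thesis
    by (rule has_derivative_eq_rhs[OF has_derivative_mult_right]) simp
qed

lemma norm_grad_of_le:
  fixes F :: "'a::euclidean_space \<Rightarrow> real"
  assumes F: "\<And>z. F z = c + T z" and T: "(T has_derivative T') (at x)"
    and "C \<ge> 0" and T'_le: "\<And>h. \<bar>T' h\<bar> \<le> C * norm h"
  shows "norm (grad_of F x) \<le> C"
proof -
  have "F = (\<lambda>z. c + T z)" using F by auto
  then have "(F has_derivative T') (at x)"
    using has_derivative_add[OF has_derivative_const T, of c] by simp
  moreover have "linear T'" using T by (simp add: has_derivative_bounded_linear bounded_linear.linear)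
  \<comment> \<open>the Riesz representative of the derivative is an explicit gradient, so SOME finds one\<close>
  then have "T' h = inner h (\<Sum>b\<in>Basis. T' b *\<^sub>R b)" for h
    by (subst euclidean_representation[symmetric, of h])
       (simp add: linear_sum linear_scale inner_sum_right mult.commute)
  ultimately have "GDERIV F x :> (\<Sum>b\<in>Basis. T' b *\<^sub>R b)"
    unfolding gderiv_def by (metis (no_types) ext)
  then have "GDERIV F x :> grad_of F x" unfolding grad_of_def by (rule someI)
  then have "T' = (\<lambda>h. inner h (grad_of F x))"
    using \<open>(F has_derivative T') (at x)\<close> has_derivative_unique by (auto simp: gderiv_def)
  then have "(norm (grad_of F x))\<^sup>2 \<le> C * norm (grad_of F x)"
    using T'_le[of "grad_of F x"] by (simp add: power2_norm_eq_inner)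
  then show ?thesis
    using \<open>C \<ge> 0\<close> by (cases "norm (grad_of F x) = 0") (auto simp: power2_eq_square)
qed

text \<open>At a minimiser x of G the derivative of G vanishes, so the gradient of F at x is
  controlled by the difference of the two derivatives alone.\<close>

lemma norm_grad_of_le_at_minimizer:
  fixes F G :: "'a::euclidean_space \<Rightarrow> real"
  assumes "\<And>z. F z = c + T z" and "(T has_derivative T') (at x)"
    and G: "(G has_derivative G') (at x)" and min: "\<And>z. G x \<le> G z"
    and "C \<ge> 0" and "\<And>h. \<bar>T' h - G' h\<bar> \<le> C * norm h"
  shows "norm (grad_of F x) \<le> C"
proof -
  have "G' h = 0" for h
    using differential_zero_maxmin[of x UNIV G G'] G min by auto
  then show ?thesis by (intro norm_grad_of_le[OF assms(1,2,5)]) (use assms(6) in simp)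
qed

lemma real_analytic_derivs:
  assumes "real_analytic f"
  shows "(f has_real_derivative deriv f x) (at x)"
    and "(deriv f has_real_derivative deriv (deriv f) x) (at x)"
proof -
  obtain r a where r: "r > 0" and s: "\<And>y. \<bar>y - x\<bar> < r \<Longrightarrow> (\<lambda>n. a n * (y - x) ^ n) sums f y"
    using assms unfolding real_analytic_def by blast
  define g where "g t = (\<Sum>n. a n * t ^ n)" for t :: real
  define g1 where "g1 t = (\<Sum>n. diffs a n * t ^ n)" for t :: real
  define g2 where "g2 t = (\<Sum>n. diffs (diffs a) n * t ^ n)" for t :: real
  have sm: "summable (\<lambda>n. a n * t ^ n)" if "norm t < r" for t :: real
    using s[of "x + t"] that by (auto simp: sums_iff)
  have gf: "g (y - x) = f y" if "\<bar>y - x\<bar> < r" for y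
    using s[OF that] unfolding g_def by (simp add: sums_iff)
  have dg: "(g has_real_derivative g1 t) (at t)" if "norm t < r" for t
    unfolding g_def g1_def by (rule termdiffs_strong'[OF sm that])
  have sm1: "summable (\<lambda>n. diffs a n * t ^ n)" if "norm t < r" for t :: real
    by (rule termdiff_converges[OF that sm])
  have dg1: "(g1 has_real_derivative g2 t) (at t)" if "norm t < r" for t
    unfolding g1_def g2_def by (rule termdiffs_strong'[OF sm1 that])
  have S: "open (ball x r)" by simp
  have x: "x \<in> ball x r" using r by simp
  have df: "(f has_real_derivative g1 (y - x)) (at y)" if "y \<in> ball x r" for y
  proof -
    have "norm (y - x) < r" using that by (simp add: dist_norm abs_minus_commute)
    then have "((\<lambda>y. g (y - x)) has_real_derivative g1 (y - x)) (at y)"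
      using dg DERIV_shift[of g "g1 (y - x)" y "- x"] by simp
    then show ?thesis
      by (rule has_field_derivative_transform_within_open[OF _ S that])
         (use gf in \<open>auto simp: dist_norm abs_minus_commute\<close>)
  qed
  show "(f has_real_derivative deriv f x) (at x)"
    using df[OF x] DERIV_imp_deriv[OF df[OF x]] by simp
  have "((\<lambda>y. g1 (y - x)) has_real_derivative g2 0) (at x)"
    using dg1[of 0] r DERIV_shift[of g1 "g2 0" x "- x"] by simp
  then have "(deriv f has_real_derivative g2 0) (at x)"
    by (rule has_field_derivative_transform_within_open[OF _ S x])
       (use df[THEN DERIV_imp_deriv] in auto)
  then show "(deriv f has_real_derivative deriv (deriv f) x) (at x)"
    using DERIV_imp_deriv by metis
qed

lemma abs_diff_le_by_deriv_bound:
  assumes "\<And>y. (h has_real_derivative h' y) (at y)" and "\<And>y. \<bar>h' y\<bar> \<le> M"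
  shows "\<bar>h a - h b\<bar> \<le> M * \<bar>a - b\<bar>"
proof -
  have *: "\<bar>h v - h u\<bar> \<le> M * \<bar>v - u\<bar>" if "u < v" for u v
  proof -
    have "\<exists>z. u < z \<and> z < v \<and> h v - h u = (v - u) * h' z"
      by (rule MVT2[OF that]) (rule assms)
    then obtain z where "h v - h u = (v - u) * h' z" by blast
    then have "\<bar>h v - h u\<bar> = \<bar>v - u\<bar> * \<bar>h' z\<bar>" by (simp add: abs_mult)
    also have "\<dots> \<le> \<bar>v - u\<bar> * M" by (intro mult_left_mono assms) simp
    finally show ?thesis by (simp add: mult.commute)
  qed
  show ?thesis
    using *[of a b] *[of b a] by (cases a b rule: linorder_cases) (auto simp: abs_minus_commute)
qed

lemma le_one_add_of_scaled_power2_le: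
  fixes x a M :: real
  assumes "a > 0" and "a/2 * x\<^sup>2 \<le> M"
  shows "x \<le> 1 + 2*M/a"
proof -
  have "x\<^sup>2 \<le> 2*M/a" using assms by (simp add: field_simps)
  moreover have "x \<le> 1 + x\<^sup>2" using zero_le_power2[of "x - 1/2"] by (simp add: power2_eq_square algebra_simps)
  ultimately show ?thesis by linarith
qed

definition layer_residual ::
    "(real \<Rightarrow> real) \<Rightarrow> real^'k^'k \<Rightarrow> real^'c^'k \<Rightarrow> real^'c^'k \<Rightarrow> real^'c^'k" where
  "layer_residual s W A B = A + ew s (W ** A) - B"

lemma has_derivative_layer_residual_weight:
  fixes A B :: "real^'c^'k"
  assumes "\<And>x. (s has_real_derivative deriv s x) (at x)"
  shows "((\<lambda>Z. layer_residual s Z A B) has_derivative (\<lambda>v. ew_deriv s (W ** A) (v ** A))) (at W)"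
proof -
  have "((\<lambda>Z. ew s (Z ** A)) has_derivative (\<lambda>v. ew_deriv s (W ** A) (v ** A))) (at W)"
    using has_derivative_compose[OF bounded_linear_imp_has_derivative[OF bounded_linear_matrix_mult_right]
        has_derivative_ew[OF assms]] .
  then show ?thesis unfolding layer_residual_def
    by (rule has_derivative_eq_rhs[OF has_derivative_diff[OF has_derivative_add[OF has_derivative_const]
          has_derivative_const]]) simp
qed

lemma has_derivative_layer_residual_input:
  fixes W :: "real^'k^'k" and B :: "real^'c^'k"
  assumes "\<And>x. (s has_real_derivative deriv s x) (at x)"
  shows "((\<lambda>Z. layer_residual s W Z B) has_derivative (\<lambda>v. v + ew_deriv s (W ** A) (W ** v))) (at A)"
proof -
  have "((\<lambda>Z. ew s (W ** Z)) has_derivative (\<lambda>v. ew_deriv s (W ** A) (W ** v))) (at A)"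
    using has_derivative_compose[OF bounded_linear_imp_has_derivative[OF bounded_linear_matrix_mult_left]
        has_derivative_ew[OF assms]] .
  then show ?thesis unfolding layer_residual_def
    by (rule has_derivative_eq_rhs[OF has_derivative_diff[OF has_derivative_add[OF has_derivative_ident]
          has_derivative_const]]) simp
qed

lemma has_derivative_layer_residual_target:
  "((\<lambda>Z. layer_residual s W A Z) has_derivative (\<lambda>h. 0 - h)) (at B)"
  unfolding layer_residual_def by (rule has_derivative_diff[OF has_derivative_const has_derivative_ident])

lemma norm_layer_residual_le:
  fixes W :: "real^'k^'k" and A B :: "real^'c^'k"
  assumes "\<And>x. \<bar>s x\<bar> \<le> p0"
  shows "norm (layer_residual s W A B) \<le> norm A + real (CARD('k) * CARD('c)) * p0 + norm B"
proof -
  have "norm (ew s (W ** A)) \<le> real (CARD('k) * CARD('c)) * p0"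
    by (rule norm_ew_le) (rule assms)
  then show ?thesis
    using norm_triangle_ineq[of "A + ew s (W ** A)" "- B"] norm_triangle_ineq[of A "ew s (W ** A)"]
    unfolding layer_residual_def by simp
qed

lemma norm_layer_residual_diff_le:
  fixes W :: "real^'k^'k" and A A' B B' :: "real^'c^'k"
  assumes "\<And>x y. \<bar>s x - s y\<bar> \<le> p1 * \<bar>x - y\<bar>" and "p1 \<ge> 0" and "norm W \<le> M"
    and "norm (A - A') \<le> \<delta>" and "norm (B - B') \<le> \<delta>"
  shows "norm (layer_residual s W A B - layer_residual s W A' B') \<le> (2 + p1 * M) * \<delta>"
proof -
  have "layer_residual s W A B - layer_residual s W A' B'
      = (A - A') + (ew s (W ** A) - ew s (W ** A')) - (B - B')"
    unfolding layer_residual_def by (simp add: algebra_simps)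
  then have "norm (layer_residual s W A B - layer_residual s W A' B')
      \<le> norm (A - A') + norm (ew s (W ** A) - ew s (W ** A')) + norm (B - B')"
    using norm_triangle_ineq4[of "A - A' + (ew s (W ** A) - ew s (W ** A'))" "B - B'"]
      norm_triangle_ineq[of "A - A'" "ew s (W ** A) - ew s (W ** A')"] by simp
  moreover have "norm (ew s (W ** A) - ew s (W ** A')) \<le> p1 * (M * \<delta>)"
  proof -
    have "norm (ew s (W ** A) - ew s (W ** A')) \<le> p1 * norm (W ** A - W ** A')"
      by (rule norm_ew_diff_le) (fact assms(1), fact)
    also have "\<dots> \<le> p1 * (M * \<delta>)"
      using norm_matrix_mult_le_mult[OF assms(3,4)] assms(2)
      by (intro mult_left_mono) (auto simp: matrix_diff_ldistrib)
    finally show ?thesis .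
  qed
  ultimately show ?thesis using assms(4,5) by (simp add: algebra_simps)
qed

lemma norm_ew_deriv_input_diff_le:
  fixes W :: "real^'k^'k" and A A' :: "real^'c^'k"
  assumes ds_bound: "\<And>x. \<bar>deriv s x\<bar> \<le> p1"
    and ds_lip: "\<And>x y. \<bar>deriv s x - deriv s y\<bar> \<le> p2 * \<bar>x - y\<bar>" and "p2 \<ge> 0"
    and W: "norm W \<le> M" and A: "norm A \<le> M" and dA: "norm (A - A') \<le> \<delta>"
  shows "norm (ew_deriv s (W ** A) (v ** A) - ew_deriv s (W ** A') (v ** A')) \<le> (p2 * M * M + p1) * \<delta> * norm v"
proof -
  have p1: "p1 \<ge> 0" using ds_bound[of 0] by simp
  have M: "M \<ge> 0" and \<delta>: "\<delta> \<ge> 0" using W dA norm_ge_zero order_trans by blast+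
  have "norm (ew_deriv s (W ** A) (v ** A) - ew_deriv s (W ** A') (v ** A))
      \<le> p2 * norm (W ** A - W ** A') * norm (v ** A)"
    by (rule norm_ew_deriv_diff_le) (fact ds_lip, fact)
  also have "\<dots> \<le> p2 * (M * \<delta>) * (norm v * M)"
    using norm_matrix_mult_le_mult[OF W dA] norm_matrix_mult_le_mult[OF order_refl A] \<open>p2 \<ge> 0\<close> M \<delta>
    by (intro mult_mono mult_left_mono) (auto simp: matrix_diff_ldistrib)
  finally have "norm (ew_deriv s (W ** A) (v ** A) - ew_deriv s (W ** A') (v ** A)) \<le> p2 * (M * \<delta>) * (norm v * M)" .
  moreover have "norm (ew_deriv s (W ** A') (v ** (A - A'))) \<le> p1 * norm (v ** (A - A'))"
    by (rule norm_ew_deriv_le) (rule ds_bound)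
  then have "norm (ew_deriv s (W ** A') (v ** (A - A'))) \<le> p1 * (norm v * \<delta>)"
    using norm_matrix_mult_le_mult[OF order_refl dA] p1 by (meson mult_left_mono order_trans)
  moreover have split: "ew_deriv s (W ** A) (v ** A) - ew_deriv s (W ** A') (v ** A')
      = (ew_deriv s (W ** A) (v ** A) - ew_deriv s (W ** A') (v ** A)) + ew_deriv s (W ** A') (v ** (A - A'))"
    by (simp add: ew_deriv_diff[symmetric] matrix_diff_ldistrib)
  ultimately have "norm (ew_deriv s (W ** A) (v ** A) - ew_deriv s (W ** A') (v ** A'))
      \<le> p2 * (M * \<delta>) * (norm v * M) + p1 * (norm v * \<delta>)"
    unfolding split
    using norm_triangle_ineq[of "ew_deriv s (W ** A) (v ** A) - ew_deriv s (W ** A') (v ** A)"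
        "ew_deriv s (W ** A') (v ** (A - A'))"] by linarith
  then show ?thesis by (simp add: algebra_simps)
qed

lemma layer_residual_weight_deriv_diff_le:
  fixes W :: "real^'k^'k" and A A' B B' :: "real^'c^'k"
  assumes s_lip: "\<And>x y. \<bar>s x - s y\<bar> \<le> p1 * \<bar>x - y\<bar>"
    and ds_bound: "\<And>x. \<bar>deriv s x\<bar> \<le> p1"
    and ds_lip: "\<And>x y. \<bar>deriv s x - deriv s y\<bar> \<le> p2 * \<bar>x - y\<bar>" and "p2 \<ge> 0"
    and W: "norm W \<le> M" and A: "norm A \<le> M"
    and dA: "norm (A - A') \<le> \<delta>" and dB: "norm (B - B') \<le> \<delta>"
    and R': "norm (layer_residual s W A' B') \<le> R"
  shows "\<bar>inner (layer_residual s W A B) (ew_deriv s (W ** A) (v ** A))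
          - inner (layer_residual s W A' B') (ew_deriv s (W ** A') (v ** A'))\<bar>
         \<le> ((2 + p1 * M) * (p1 * M) + R * (p2 * M * M + p1)) * \<delta> * norm v"
proof -
  have p1: "p1 \<ge> 0" using ds_bound[of 0] by simp
  have M: "M \<ge> 0" and \<delta>: "\<delta> \<ge> 0" using W dA norm_ge_zero order_trans by blast+
  have R: "R \<ge> 0" using R' norm_ge_zero order_trans by blast
  define r r' d d' where "r = layer_residual s W A B" and "r' = layer_residual s W A' B'"
    and "d = ew_deriv s (W ** A) (v ** A)" and "d' = ew_deriv s (W ** A') (v ** A')"
  have r_diff: "norm (r - r') \<le> (2 + p1 * M) * \<delta>"
    unfolding r_def r'_def by (rule norm_layer_residual_diff_le[OF s_lip p1 W dA dB])
  have "norm d \<le> p1 * norm (v ** A)"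
    unfolding d_def by (rule norm_ew_deriv_le) (rule ds_bound)
  also have "\<dots> \<le> p1 * (norm v * M)" using norm_matrix_mult_le_mult[OF order_refl A] p1 by (rule mult_left_mono)
  finally have d_norm: "norm d \<le> p1 * M * norm v" by (simp add: ac_simps)
  have d_diff: "norm (d - d') \<le> (p2 * M * M + p1) * \<delta> * norm v"
    unfolding d_def d'_def by (rule norm_ew_deriv_input_diff_le[OF ds_bound ds_lip \<open>p2 \<ge> 0\<close> W A dA])
  have "inner r d - inner r' d' = inner (r - r') d + inner r' (d - d')"
    by (simp add: inner_diff_left inner_diff_right)
  then have "\<bar>inner r d - inner r' d'\<bar> \<le> norm (r - r') * norm d + norm r' * norm (d - d')"
    using abs_triangle_ineq[of "inner (r - r') d" "inner r' (d - d')"]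
      Cauchy_Schwarz_ineq2[of "r - r'" d] Cauchy_Schwarz_ineq2[of r' "d - d'"] by linarith
  also have "\<dots> \<le> ((2 + p1 * M) * \<delta>) * (p1 * M * norm v) + R * ((p2 * M * M + p1) * \<delta> * norm v)"
    using r_diff d_norm R'[folded r'_def] d_diff p1 M \<delta> R
    by (intro add_mono mult_mono) auto
  finally show ?thesis unfolding r_def r'_def d_def d'_def by (simp add: algebra_simps)
qed

section \<open>Block structure of the augmented Lagrangian\<close>

lemma lagr_eq_layer_residual:
  "lagr X Y N lam mu beta sig W WN V VN Lam =
     (1/2) * (norm (VN - Y))\<^sup>2
     + lam / 2 * ((\<Sum>i=1..N-1. (norm (W i))\<^sup>2) + (norm WN)\<^sup>2)
     + mu / 2 * (\<Sum>i=1..N-1. (norm (layer_residual (sig i) (W i) (Vx X V (i-1)) (V i)))\<^sup>2)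
     + inner Lam (WN ** V (N-1) - VN)
     + beta / 2 * (norm (WN ** V (N-1) - VN))\<^sup>2"
  by (simp add: lagr_def layer_residual_def)

lemma sum_replace_one:
  assumes "finite S" "a \<in> S" "\<And>j. j \<in> S \<Longrightarrow> j \<noteq> a \<Longrightarrow> f j = g j"
  shows "sum f S = sum g S - g a + (f a :: real)"
  using sum.remove[OF assms(1,2), of f] sum.remove[OF assms(1,2), of g] assms(3)
    sum.cong[of "S - {a}" "S - {a}" f g] by auto

lemma sum_replace_two:
  assumes "finite S" "a \<in> S" "b \<in> S" "a \<noteq> b"
    and "\<And>j. j \<in> S \<Longrightarrow> j \<noteq> a \<Longrightarrow> j \<noteq> b \<Longrightarrow> f j = g j"
  shows "sum f S = sum g S - g a - g b + f a + (f b :: real)"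
proof -
  have "sum f (S - {a}) = sum g (S - {a}) - g b + f b"
    by (rule sum_replace_one) (use assms in auto)
  then show ?thesis
    using sum.remove[OF assms(1,2), of f] sum.remove[OF assms(1,2), of g] by simp
qed

lemma lagr_update_weight:
  assumes "i \<in> {1..N-1}"
  shows "lagr X Y N lam mu beta sig (W(i := Z)) WN V VN Lam =
     lagr X Y N lam mu beta sig W WN V VN Lam
     - (lam/2 * (norm (W i))\<^sup>2 + mu/2 * (norm (layer_residual (sig i) (W i) (Vx X V (i-1)) (V i)))\<^sup>2)
     + (lam/2 * (norm Z)\<^sup>2 + mu/2 * (norm (layer_residual (sig i) Z (Vx X V (i-1)) (V i)))\<^sup>2)"
proof -
  have weights: "(\<Sum>j=1..N-1. (norm ((W(i:=Z)) j))\<^sup>2) = (\<Sum>j=1..N-1. (norm (W j))\<^sup>2) - (norm (W i))\<^sup>2 + (norm Z)\<^sup>2"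
    using sum_replace_one[of "{1..N-1}" i "\<lambda>j. (norm ((W(i:=Z)) j))\<^sup>2" "\<lambda>j. (norm (W j))\<^sup>2"] assms
    by simp
  have residuals: "(\<Sum>j=1..N-1. (norm (layer_residual (sig j) ((W(i:=Z)) j) (Vx X V (j-1)) (V j)))\<^sup>2)
     = (\<Sum>j=1..N-1. (norm (layer_residual (sig j) (W j) (Vx X V (j-1)) (V j)))\<^sup>2)
       - (norm (layer_residual (sig i) (W i) (Vx X V (i-1)) (V i)))\<^sup>2
       + (norm (layer_residual (sig i) Z (Vx X V (i-1)) (V i)))\<^sup>2"
    using sum_replace_one[of "{1..N-1}" i
        "\<lambda>j. (norm (layer_residual (sig j) ((W(i:=Z)) j) (Vx X V (j-1)) (V j)))\<^sup>2"
        "\<lambda>j. (norm (layer_residual (sig j) (W j) (Vx X V (j-1)) (V j)))\<^sup>2"] assms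
    by simp
  show ?thesis unfolding lagr_eq_layer_residual weights residuals by (simp add: algebra_simps)
qed

lemma lagr_update_output_weight:
  "lagr X Y N lam mu beta sig W Z V VN Lam =
     lagr X Y N lam mu beta sig W WN V VN Lam
     - (lam/2 * (norm WN)\<^sup>2 + inner Lam (WN ** V (N-1) - VN) + beta/2 * (norm (WN ** V (N-1) - VN))\<^sup>2)
     + (lam/2 * (norm Z)\<^sup>2 + inner Lam (Z ** V (N-1) - VN) + beta/2 * (norm (Z ** V (N-1) - VN))\<^sup>2)"
  unfolding lagr_eq_layer_residual by (simp add: algebra_simps)

lemma lagr_update_output:
  "lagr X Y N lam mu beta sig W WN V Z Lam =
     lagr X Y N lam mu beta sig W WN V VN Lam
     - (1/2 * (norm (VN - Y))\<^sup>2 + inner Lam (WN ** V (N-1) - VN) + beta/2 * (norm (WN ** V (N-1) - VN))\<^sup>2)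
     + (1/2 * (norm (Z - Y))\<^sup>2 + inner Lam (WN ** V (N-1) - Z) + beta/2 * (norm (WN ** V (N-1) - Z))\<^sup>2)"
  unfolding lagr_eq_layer_residual by (simp add: algebra_simps)

lemma lagr_update_multiplier:
  "lagr X Y N lam mu beta sig W WN V VN Z =
     lagr X Y N lam mu beta sig W WN V VN Lam - inner Lam (WN ** V (N-1) - VN) + inner Z (WN ** V (N-1) - VN)"
  unfolding lagr_eq_layer_residual by (simp add: algebra_simps)

lemma lagr_update_hidden:
  assumes "i \<in> {1..N-2}"
  shows "lagr X Y N lam mu beta sig W WN (V(i := Z)) VN Lam =
     lagr X Y N lam mu beta sig W WN V VN Lam
     - mu/2 * ((norm (layer_residual (sig i) (W i) (Vx X V (i-1)) (V i)))\<^sup>2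
               + (norm (layer_residual (sig (i+1)) (W (i+1)) (V i) (V (i+1))))\<^sup>2)
     + mu/2 * ((norm (layer_residual (sig i) (W i) (Vx X V (i-1)) Z))\<^sup>2
               + (norm (layer_residual (sig (i+1)) (W (i+1)) Z (V (i+1))))\<^sup>2)"
proof -
  have i: "1 \<le> i" "i + 1 \<le> N - 1" using assms by auto
  have Vx_upd: "Vx X (V(i:=Z)) (j - 1) = Vx X V (j - 1)" if "j \<noteq> i + 1" for j
    using that i by (simp add: Vx_def; arith)
  have Vx_next: "Vx X (V(i:=Z)) (i + 1 - 1) = Z" "Vx X V (i + 1 - 1) = V i"
    using i by (simp_all add: Vx_def)
  have residuals: "(\<Sum>j=1..N-1. (norm (layer_residual (sig j) (W j) (Vx X (V(i:=Z)) (j-1)) ((V(i:=Z)) j)))\<^sup>2)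
     = (\<Sum>j=1..N-1. (norm (layer_residual (sig j) (W j) (Vx X V (j-1)) (V j)))\<^sup>2)
       - (norm (layer_residual (sig i) (W i) (Vx X V (i-1)) (V i)))\<^sup>2
       - (norm (layer_residual (sig (i+1)) (W (i+1)) (V i) (V (i+1))))\<^sup>2
       + (norm (layer_residual (sig i) (W i) (Vx X V (i-1)) Z))\<^sup>2
       + (norm (layer_residual (sig (i+1)) (W (i+1)) Z (V (i+1))))\<^sup>2"
    using sum_replace_two[of "{1..N-1}" i "i+1"
        "\<lambda>j. (norm (layer_residual (sig j) (W j) (Vx X (V(i:=Z)) (j-1)) ((V(i:=Z)) j)))\<^sup>2"
        "\<lambda>j. (norm (layer_residual (sig j) (W j) (Vx X V (j-1)) (V j)))\<^sup>2"]
      i Vx_upd Vx_next Vx_upd[of i]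
    by simp
  have last: "(V(i:=Z)) (N-1) = V (N-1)" using i by simp
  show ?thesis unfolding lagr_eq_layer_residual residuals last by (simp add: algebra_simps)
qed

lemma lagr_update_last_hidden:
  assumes "N \<ge> 3"
  shows "lagr X Y N lam mu beta sig W WN (V(N-1 := Z)) VN Lam =
     lagr X Y N lam mu beta sig W WN V VN Lam
     - (mu/2 * (norm (layer_residual (sig (N-1)) (W (N-1)) (Vx X V (N-2)) (V (N-1))))\<^sup>2
        + inner Lam (WN ** V (N-1) - VN) + beta/2 * (norm (WN ** V (N-1) - VN))\<^sup>2)
     + (mu/2 * (norm (layer_residual (sig (N-1)) (W (N-1)) (Vx X V (N-2)) Z))\<^sup>2
        + inner Lam (WN ** Z - VN) + beta/2 * (norm (WN ** Z - VN))\<^sup>2)"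
proof -
  have Vx_upd: "Vx X (V(N-1:=Z)) (j - 1) = Vx X V (j - 1)" if "j \<in> {1..N-1}" for j
    using that assms by (simp add: Vx_def; arith)
  have "N - 1 - 1 = N - 2" by simp
  have residuals: "(\<Sum>j=1..N-1. (norm (layer_residual (sig j) (W j) (Vx X (V(N-1:=Z)) (j-1)) ((V(N-1:=Z)) j)))\<^sup>2)
     = (\<Sum>j=1..N-1. (norm (layer_residual (sig j) (W j) (Vx X V (j-1)) (V j)))\<^sup>2)
       - (norm (layer_residual (sig (N-1)) (W (N-1)) (Vx X V (N-2)) (V (N-1))))\<^sup>2
       + (norm (layer_residual (sig (N-1)) (W (N-1)) (Vx X V (N-2)) Z))\<^sup>2"
    using sum_replace_one[of "{1..N-1}" "N-1"
        "\<lambda>j. (norm (layer_residual (sig j) (W j) (Vx X (V(N-1:=Z)) (j-1)) ((V(N-1:=Z)) j)))\<^sup>2"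
        "\<lambda>j. (norm (layer_residual (sig j) (W j) (Vx X V (j-1)) (V j)))\<^sup>2"]
      assms Vx_upd Vx_upd[of "N-1"] \<open>N - 1 - 1 = N - 2\<close>
    by simp
  show ?thesis unfolding lagr_eq_layer_residual residuals by (simp add: algebra_simps)
qed

lemma lagr_cong_hidden:
  assumes "N \<ge> 2" and "\<forall>i\<in>{1..N-1}. U i = U' i"
  shows "lagr X Y N lam mu beta sig W WN U VN Lam = lagr X Y N lam mu beta sig W WN U' VN Lam"
proof -
  have "Vx X U (i - 1) = Vx X U' (i - 1)" if "i \<in> {1..N-1}" for i
  proof -
    have "i - 1 = 0 \<or> i - 1 \<in> {1..N-1}" using that by auto
    then show ?thesis using assms(2) by (auto simp: Vx_def)
  qed
  then have "(\<Sum>i=1..N-1. (norm (layer_residual (sig i) (W i) (Vx X U (i-1)) (U i)))\<^sup>2)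
      = (\<Sum>i=1..N-1. (norm (layer_residual (sig i) (W i) (Vx X U' (i-1)) (U' i)))\<^sup>2)"
    using assms(2) by (intro sum.cong) auto
  moreover have "U (N-1) = U' (N-1)" using assms by auto
  ultimately show ?thesis unfolding lagr_eq_layer_residual by simp
qed

lemma inner_add_norm_power2_complete_square:
  fixes L e :: "'a::real_inner"
  assumes "beta > 0"
  shows "inner L e + beta/2 * (norm e)\<^sup>2 = beta/2 * (norm (e + (1/beta) *\<^sub>R L))\<^sup>2 - (norm L)\<^sup>2 / (2*beta)"
proof -
  have "(norm (e + (1/beta) *\<^sub>R L))\<^sup>2 = (norm e)\<^sup>2 + 2/beta * inner L e + (norm L)\<^sup>2 / beta\<^sup>2"
    unfolding power2_norm_eq_inner
    by (simp add: inner_add_left inner_add_right inner_commute power2_eq_square)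
  then show ?thesis using assms by (simp add: field_simps power2_eq_square)
qed

lemma lagr_eq_completed_square:
  assumes "beta > 0"
  shows "lagr X Y N lam mu beta sig W WN V VN Lam = 1/2 * (norm (VN - Y))\<^sup>2
     + (\<Sum>i=1..N-1. lam/2 * (norm (W i))\<^sup>2
                   + mu/2 * (norm (layer_residual (sig i) (W i) (Vx X V (i-1)) (V i)))\<^sup>2)
     + (lam/2 * (norm WN)\<^sup>2 + beta/2 * (norm (WN ** V (N-1) - VN + (1/beta) *\<^sub>R Lam))\<^sup>2)
     - (norm Lam)\<^sup>2 / (2*beta)"
  using inner_add_norm_power2_complete_square[OF assms, of Lam "WN ** V (N-1) - VN"]
  unfolding lagr_eq_layer_residual by (simp add: sum.distrib sum_distrib_left algebra_simps)

text \<open>The output step (e) minimises a quadratic with Hessian (1 + beta) I; this is its exact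
  decrease.\<close>

lemma output_step_decrease:
  fixes Z Vk Y P L :: "'a::real_inner"
  assumes "(1 + beta) *\<^sub>R Vk = Y + beta *\<^sub>R P + L"
  shows "(1/2 * (norm (Z - Y))\<^sup>2 + inner L (P - Z) + beta/2 * (norm (P - Z))\<^sup>2)
       - (1/2 * (norm (Vk - Y))\<^sup>2 + inner L (P - Vk) + beta/2 * (norm (P - Vk))\<^sup>2)
       = (1 + beta)/2 * (norm (Z - Vk))\<^sup>2"
proof -
  have Y: "Y = (1 + beta) *\<^sub>R Vk - beta *\<^sub>R P - L" using assms by (simp add: algebra_simps)
  show ?thesis unfolding Y power2_norm_eq_inner
    by (simp add: inner_diff_left inner_diff_right inner_add_left inner_add_right inner_commute algebra_simps)
qed

lemma lagr_grad_norm_le: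
  assumes "N \<ge> 1" and "0 \<le> c"
    and "\<And>i. i \<in> {1..N-1} \<Longrightarrow> norm (grad_of (\<lambda>Z. lagr X Y N lam mu beta sig (W(i := Z)) WN V VN Lam) (W i)) \<le> c"
    and "norm (grad_of (\<lambda>Z. lagr X Y N lam mu beta sig W Z V VN Lam) WN) \<le> c"
    and "\<And>i. i \<in> {1..N-1} \<Longrightarrow> norm (grad_of (\<lambda>Z. lagr X Y N lam mu beta sig W WN (V(i := Z)) VN Lam) (V i)) \<le> c"
    and "norm (grad_of (\<lambda>Z. lagr X Y N lam mu beta sig W WN V Z Lam) VN) \<le> c"
    and "norm (grad_of (\<lambda>Z. lagr X Y N lam mu beta sig W WN V VN Z) Lam) \<le> c"
  shows "lagr_grad_norm X Y N lam mu beta sig W WN V VN Lam \<le> real (2*N+1) * c"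
proof -
  have sq: "x\<^sup>2 \<le> c\<^sup>2" if "x \<le> c" "0 \<le> x" for x :: real using that by (rule power_mono)
  have "(\<Sum>i=1..N-1. (norm (grad_of (\<lambda>Z. lagr X Y N lam mu beta sig (W(i := Z)) WN V VN Lam) (W i)))\<^sup>2)
      \<le> real (N-1) * c\<^sup>2"
    using sum_bounded_above[of "{1..N-1}" "\<lambda>i. (norm (grad_of (\<lambda>Z. lagr X Y N lam mu beta sig (W(i := Z)) WN V VN Lam) (W i)))\<^sup>2" "c\<^sup>2"]
      assms(3) sq by simp
  moreover have "(\<Sum>i=1..N-1. (norm (grad_of (\<lambda>Z. lagr X Y N lam mu beta sig W WN (V(i := Z)) VN Lam) (V i)))\<^sup>2)
      \<le> real (N-1) * c\<^sup>2"
    using sum_bounded_above[of "{1..N-1}" "\<lambda>i. (norm (grad_of (\<lambda>Z. lagr X Y N lam mu beta sig W WN (V(i := Z)) VN Lam) (V i)))\<^sup>2" "c\<^sup>2"]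
      assms(5) sq by simp
  moreover have "real (N-1) * c\<^sup>2 + c\<^sup>2 + real (N-1) * c\<^sup>2 + c\<^sup>2 + c\<^sup>2 \<le> (real (2*N+1) * c)\<^sup>2"
  proof -
    have "real (N-1) * c\<^sup>2 + c\<^sup>2 + real (N-1) * c\<^sup>2 + c\<^sup>2 + c\<^sup>2 \<le> real (2*N+1) * c\<^sup>2"
      using assms(1) by (simp add: of_nat_diff algebra_simps)
    also have "\<dots> \<le> (real (2*N+1))\<^sup>2 * c\<^sup>2" by (intro mult_right_mono) (auto simp: power2_eq_square)
    finally show ?thesis by (simp add: power_mult_distrib)
  qed
  ultimately have "(\<Sum>i=1..N-1. (norm (grad_of (\<lambda>Z. lagr X Y N lam mu beta sig (W(i := Z)) WN V VN Lam) (W i)))\<^sup>2)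
     + (norm (grad_of (\<lambda>Z. lagr X Y N lam mu beta sig W Z V VN Lam) WN))\<^sup>2
     + (\<Sum>i=1..N-1. (norm (grad_of (\<lambda>Z. lagr X Y N lam mu beta sig W WN (V(i := Z)) VN Lam) (V i)))\<^sup>2)
     + (norm (grad_of (\<lambda>Z. lagr X Y N lam mu beta sig W WN V Z Lam) VN))\<^sup>2
     + (norm (grad_of (\<lambda>Z. lagr X Y N lam mu beta sig W WN V VN Z) Lam))\<^sup>2 \<le> (real (2*N+1) * c)\<^sup>2"
    using sq[OF assms(4)] sq[OF assms(6)] sq[OF assms(7)] by simp
  then have "lagr_grad_norm X Y N lam mu beta sig W WN V VN Lam \<le> sqrt ((real (2*N+1) * c)\<^sup>2)"
    unfolding lagr_grad_norm_def by (rule real_sqrt_le_mono)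
  then show ?thesis using assms(2) by simp
qed

lemma iter_diff_norm_ge:
  shows iter_diff_norm_ge_weight: "i \<in> {1..N-1} \<Longrightarrow> norm (W k i - W (k-1) i) \<le> iter_diff_norm N W WN V VN Lam k"
    and iter_diff_norm_ge_hidden: "i \<in> {1..N-1} \<Longrightarrow> norm (V k i - V (k-1) i) \<le> iter_diff_norm N W WN V VN Lam k"
    and iter_diff_norm_ge_output: "norm (VN k - VN (k-1)) \<le> iter_diff_norm N W WN V VN Lam k"
    and iter_diff_norm_ge_multiplier: "norm (Lam k - Lam (k-1)) \<le> iter_diff_norm N W WN V VN Lam k"
    and iter_diff_norm_nonneg: "0 \<le> iter_diff_norm N W WN V VN Lam k"
proof -
  let ?a = "\<Sum>i=1..N-1. (norm (W k i - W (k-1) i))\<^sup>2"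
  let ?b = "\<Sum>i=1..N-1. (norm (V k i - V (k-1) i))\<^sup>2"
  let ?S = "?a + (norm (WN k - WN (k-1)))\<^sup>2 + ?b + (norm (VN k - VN (k-1)))\<^sup>2 + (norm (Lam k - Lam (k-1)))\<^sup>2"
  have D: "iter_diff_norm N W WN V VN Lam k = sqrt ?S" by (simp add: iter_diff_norm_def)
  have ab: "0 \<le> ?a" "0 \<le> ?b" by (auto intro!: sum_nonneg)
  note sq = zero_le_power2[of "norm (WN k - WN (k-1))"] zero_le_power2[of "norm (VN k - VN (k-1))"]
    zero_le_power2[of "norm (Lam k - Lam (k-1))"]
  have le_sqrt: "x \<le> iter_diff_norm N W WN V VN Lam k" if "x\<^sup>2 \<le> ?S" for x
    unfolding D using that by (rule real_le_rsqrt)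
  show "0 \<le> iter_diff_norm N W WN V VN Lam k" unfolding D using ab by simp
  show "norm (W k i - W (k-1) i) \<le> iter_diff_norm N W WN V VN Lam k" if "i \<in> {1..N-1}"
  proof -
    have "(norm (W k i - W (k-1) i))\<^sup>2 \<le> ?a"
      by (rule member_le_sum) (use that in auto)
    then show ?thesis using ab sq by (intro le_sqrt) linarith
  qed
  show "norm (V k i - V (k-1) i) \<le> iter_diff_norm N W WN V VN Lam k" if "i \<in> {1..N-1}"
  proof -
    have "(norm (V k i - V (k-1) i))\<^sup>2 \<le> ?b"
      by (rule member_le_sum) (use that in auto)
    then show ?thesis using ab sq by (intro le_sqrt) linarith
  qed
  show "norm (VN k - VN (k-1)) \<le> iter_diff_norm N W WN V VN Lam k"
    and "norm (Lam k - Lam (k-1)) \<le> iter_diff_norm N W WN V VN Lam k"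
    using ab sq by (auto intro!: le_sqrt)
qed

lemma iter_diff_norm_ge_layer_input:
  assumes "j \<le> N - 1"
  shows "norm (Vx X (V k) j - Vx X (V (k-1)) j) \<le> iter_diff_norm N W WN V VN Lam k"
  using assms iter_diff_norm_ge_hidden[where i = j and N = N and k = k and V = V and W = W and WN = WN
      and VN = VN and Lam = Lam] iter_diff_norm_nonneg[of N W WN V VN Lam k]
  by (cases "j = 0") (auto simp: Vx_def)

section \<open>The iterates of the proximal point ADMM\<close>

locale admm2s =
  fixes X :: "real^'n^'d" and Y :: "real^'n^'q"
    and N :: nat and lam mu beta psi0 psi1 psi2 :: real
    and sig :: "nat \<Rightarrow> real \<Rightarrow> real"
    and om nu :: "nat \<Rightarrow> nat \<Rightarrow> real"
    and om_min om_max nu_min nu_max :: "nat \<Rightarrow> real"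
    and W :: "nat \<Rightarrow> nat \<Rightarrow> real^'d^'d" and WN :: "nat \<Rightarrow> real^'d^'q"
    and V :: "nat \<Rightarrow> nat \<Rightarrow> real^'n^'d" and VN Lam :: "nat \<Rightarrow> real^'n^'q"
  assumes N3: "N \<ge> 3" and lam: "lam > 0" and mu: "mu > 0" and beta: "beta > 1"
    and sig_analytic: "\<forall>i\<in>{1..N-1}. real_analytic (sig i)"
    and sig_bound: "\<forall>i\<in>{1..N-1}. \<forall>x. \<bar>sig i x\<bar> \<le> psi0"
    and sig_deriv_bound: "\<forall>i\<in>{1..N-1}. \<forall>x. \<bar>deriv (sig i) x\<bar> \<le> psi1"
    and sig_deriv2_bound: "\<forall>i\<in>{1..N-1}. \<forall>x. \<bar>deriv (deriv (sig i)) x\<bar> \<le> psi2"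
    and om_bounds: "\<forall>i\<in>{1..N-1}. \<forall>k. 0 < om_min i \<and> om_min i \<le> om i k \<and> om i k \<le> om_max i"
    and nu_bounds: "\<forall>i\<in>{1..N-2}. \<forall>k. 0 < nu_min i \<and> nu_min i \<le> nu i k \<and> nu i k \<le> nu_max i"
    and iterates: "admm2s_iterates X Y N lam mu beta sig om nu W WN V VN Lam"
begin

abbreviation "Lag Wf WNv Vf VNv Lv \<equiv> lagr X Y N lam mu beta sig Wf WNv Vf VNv Lv"

abbreviation "Lag_at k \<equiv> Lag (W k) (WN k) (V k) (VN k) (Lam k)"

abbreviation "step_diff k \<equiv> iter_diff_norm N W WN V VN Lam k"

lemma step_diff_ge:
  shows step_diff_ge_weight: "i \<in> {1..N-1} \<Longrightarrow> norm (W k i - W (k-1) i) \<le> step_diff k"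
    and step_diff_ge_hidden: "i \<in> {1..N-1} \<Longrightarrow> norm (V k i - V (k-1) i) \<le> step_diff k"
    and step_diff_ge_output: "norm (VN k - VN (k-1)) \<le> step_diff k"
    and step_diff_ge_multiplier: "norm (Lam k - Lam (k-1)) \<le> step_diff k"
    and step_diff_ge_layer_input: "j \<le> N - 1 \<Longrightarrow> norm (Vx X (V k) j - Vx X (V (k-1)) j) \<le> step_diff k"
    and step_diff_nonneg: "0 \<le> step_diff k"
  by (fact iter_diff_norm_ge_weight iter_diff_norm_ge_hidden
      iter_diff_norm_ge_output iter_diff_norm_ge_multiplier iter_diff_norm_ge_layer_input
      iter_diff_norm_nonneg)+

lemma beta_pos: "beta > 0"
  using beta by simp

lemma layer_index_one: "1 \<in> {1..N-1}"
  using N3 by auto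

lemma sig_has_deriv: "i \<in> {1..N-1} \<Longrightarrow> (sig i has_real_derivative deriv (sig i) x) (at x)"
  using sig_analytic real_analytic_derivs(1) by blast

lemma sig_lipschitz: "i \<in> {1..N-1} \<Longrightarrow> \<bar>sig i x - sig i y\<bar> \<le> psi1 * \<bar>x - y\<bar>"
  by (rule abs_diff_le_by_deriv_bound[of _ "deriv (sig i)"]) (use sig_has_deriv sig_deriv_bound in auto)

lemma sig_deriv_lipschitz: "i \<in> {1..N-1} \<Longrightarrow> \<bar>deriv (sig i) x - deriv (sig i) y\<bar> \<le> psi2 * \<bar>x - y\<bar>"
  by (rule abs_diff_le_by_deriv_bound[of _ "deriv (deriv (sig i))"])
     (use sig_analytic real_analytic_derivs(2) sig_deriv2_bound in auto)

lemma psi_nonneg: "psi0 \<ge> 0" "psi1 \<ge> 0" "psi2 \<ge> 0"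
  using sig_bound sig_deriv_bound sig_deriv2_bound layer_index_one
  by (meson abs_ge_zero order_trans)+

lemma om_bounded:
  assumes "i \<in> {1..N-1}"
  shows "0 \<le> om i k" and "om i k \<le> om_max i" and "0 \<le> om_max i"
  using om_bounds assms by (meson less_le_trans less_imp_le order_trans)+

lemma nu_bounded:
  assumes "i \<in> {1..N-2}"
  shows "0 \<le> nu i k" and "nu i k \<le> nu_max i" and "0 \<le> nu_max i"
  using nu_bounds assms by (meson less_le_trans less_imp_le order_trans)+

lemma output_weight_step_min:
  assumes "k \<ge> 1"
  shows "lam/2 * (norm (WN k))\<^sup>2 + beta/2 * (norm (WN k ** V (k-1) (N-1) - VN (k-1) + (1/beta) *\<^sub>R Lam (k-1)))\<^sup>2
          \<le> lam/2 * (norm Z)\<^sup>2 + beta/2 * (norm (Z ** V (k-1) (N-1) - VN (k-1) + (1/beta) *\<^sub>R Lam (k-1)))\<^sup>2"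
  using iterates assms unfolding admm2s_iterates_def by blast

lemma weight_step_min:
  assumes "k \<ge> 1" "i \<in> {1..N-1}"
  shows "lam/2 * (norm (W k i))\<^sup>2 + mu/2 * (norm (layer_residual (sig i) (W k i) (Vx X (V (k-1)) (i-1)) (V (k-1) i)))\<^sup>2
          + om i (k-1) / 2 * (norm (W k i - W (k-1) i))\<^sup>2
        \<le> lam/2 * (norm Z)\<^sup>2 + mu/2 * (norm (layer_residual (sig i) Z (Vx X (V (k-1)) (i-1)) (V (k-1) i)))\<^sup>2
          + om i (k-1) / 2 * (norm (Z - W (k-1) i))\<^sup>2"
  using iterates assms unfolding admm2s_iterates_def layer_residual_def by blast

lemma hidden_step_min:
  assumes "k \<ge> 1" "i \<in> {1..N-2}"
  shows "mu/2 * (norm (layer_residual (sig i) (W k i) (Vx X (V k) (i-1)) (V k i)))\<^sup>2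
          + mu/2 * (norm (layer_residual (sig (i+1)) (W k (i+1)) (V k i) (V (k-1) (i+1))))\<^sup>2
          + nu i (k-1) / 2 * (norm (V k i - V (k-1) i))\<^sup>2
        \<le> mu/2 * (norm (layer_residual (sig i) (W k i) (Vx X (V k) (i-1)) Z))\<^sup>2
          + mu/2 * (norm (layer_residual (sig (i+1)) (W k (i+1)) Z (V (k-1) (i+1))))\<^sup>2
          + nu i (k-1) / 2 * (norm (Z - V (k-1) i))\<^sup>2"
  using iterates assms unfolding admm2s_iterates_def layer_residual_def by blast

lemma last_hidden_step_min:
  assumes "k \<ge> 1"
  shows "mu/2 * (norm (layer_residual (sig (N-1)) (W k (N-1)) (Vx X (V k) (N-2)) (V k (N-1))))\<^sup>2
          + beta/2 * (norm (WN k ** V k (N-1) - VN (k-1) + (1/beta) *\<^sub>R Lam (k-1)))\<^sup>2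
        \<le> mu/2 * (norm (layer_residual (sig (N-1)) (W k (N-1)) (Vx X (V k) (N-2)) Z))\<^sup>2
          + beta/2 * (norm (WN k ** Z - VN (k-1) + (1/beta) *\<^sub>R Lam (k-1)))\<^sup>2"
  using iterates assms unfolding admm2s_iterates_def layer_residual_def by blast

lemma output_step:
  assumes "k \<ge> 1"
  shows "(1 + beta) *\<^sub>R VN k = Y + beta *\<^sub>R (WN k ** V k (N-1)) + Lam (k-1)"
  using iterates assms beta unfolding admm2s_iterates_def by simp

lemma multiplier_step:
  assumes "k \<ge> 1"
  shows "Lam k = Lam (k-1) + beta *\<^sub>R (WN k ** V k (N-1) - VN k)"
  using iterates assms unfolding admm2s_iterates_def by blast

text \<open>Steps (e) and (f) together say that the multiplier is the optimal dual variable of the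
  output loss, so it is controlled by the primal iterates.\<close>

lemma multiplier_eq_output_error:
  assumes "k \<ge> 1"
  shows "Lam k = VN k - Y"
proof -
  have "Lam k = Lam (k-1) + beta *\<^sub>R (WN k ** V k (N-1)) - beta *\<^sub>R VN k"
    using multiplier_step[OF assms] by (simp add: algebra_simps)
  also have "Lam (k-1) = (1 + beta) *\<^sub>R VN k - Y - beta *\<^sub>R (WN k ** V k (N-1))"
    using output_step[OF assms] by (simp add: algebra_simps)
  finally show ?thesis by (simp add: algebra_simps)
qed

lemma constraint_residual_eq:
  assumes "k \<ge> 1"
  shows "WN k ** V k (N-1) - VN k = (1/beta) *\<^sub>R (Lam k - Lam (k-1))"
  using multiplier_step[OF assms] beta_pos by simp

subsection \<open>Descent of the augmented Lagrangian\<close>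

lemma lagr_weight_steps_decrease:
  assumes k: "k \<ge> 1"
  shows "Lag (W k) (WN k) (V (k-1)) (VN (k-1)) (Lam (k-1)) \<le> Lag_at (k-1)"
proof -
  let ?o = "k - 1"
  have "lam/2 * (norm (W k i))\<^sup>2 + mu/2 * (norm (layer_residual (sig i) (W k i) (Vx X (V ?o) (i-1)) (V ?o i)))\<^sup>2
      \<le> lam/2 * (norm (W ?o i))\<^sup>2 + mu/2 * (norm (layer_residual (sig i) (W ?o i) (Vx X (V ?o) (i-1)) (V ?o i)))\<^sup>2"
    if i: "i \<in> {1..N-1}" for i
  proof -
    have "0 \<le> om i ?o / 2 * (norm (W k i - W ?o i))\<^sup>2" using om_bounded(1)[OF i] by simp
    then show ?thesis using weight_step_min[OF k i, of "W ?o i"] by simp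
  qed
  then have "(\<Sum>i=1..N-1. lam/2 * (norm (W k i))\<^sup>2
              + mu/2 * (norm (layer_residual (sig i) (W k i) (Vx X (V ?o) (i-1)) (V ?o i)))\<^sup>2)
     \<le> (\<Sum>i=1..N-1. lam/2 * (norm (W ?o i))\<^sup>2
              + mu/2 * (norm (layer_residual (sig i) (W ?o i) (Vx X (V ?o) (i-1)) (V ?o i)))\<^sup>2)"
    by (rule sum_mono)
  then show ?thesis
    using output_weight_step_min[OF k, of "WN ?o"] unfolding lagr_eq_completed_square[OF beta_pos]
    by linarith
qed

text \<open>The hidden variables are updated one after the other; each update decreases the
  Lagrangian, which is seen by comparing the partial sweeps U j in which V 1, ..., V j are
  already updated.\<close>

lemma lagr_hidden_sweep_step:
  assumes k: "k \<ge> 1" and j: "Suc j \<le> N - 1"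
  defines "U \<equiv> \<lambda>j i. if i \<le> j then V k i else V (k-1) i"
  shows "Lag (W k) (WN k) (U (Suc j)) (VN (k-1)) (Lam (k-1)) \<le> Lag (W k) (WN k) (U j) (VN (k-1)) (Lam (k-1))"
proof -
  let ?o = "k - 1" and ?m = "Suc j"
  have U_upd: "U ?m = (U j)(?m := V k ?m)" by (auto simp: U_def)
  have U_m: "U j ?m = V ?o ?m" by (simp add: U_def)
  have Vx_m: "Vx X (U j) (?m - 1) = Vx X (V k) (?m - 1)" by (simp add: Vx_def U_def)
  show ?thesis
  proof (cases "?m \<le> N - 2")
    case True
    then have m: "?m \<in> {1..N-2}" by auto
    have U_next: "U j (?m + 1) = V ?o (?m + 1)" by (simp add: U_def)
    have "0 \<le> nu ?m ?o / 2 * (norm (V k ?m - V ?o ?m))\<^sup>2" using nu_bounded(1)[OF m] by simp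
    then have "mu/2 * ((norm (layer_residual (sig ?m) (W k ?m) (Vx X (V k) (?m-1)) (V k ?m)))\<^sup>2
            + (norm (layer_residual (sig (?m+1)) (W k (?m+1)) (V k ?m) (V ?o (?m+1))))\<^sup>2)
        \<le> mu/2 * ((norm (layer_residual (sig ?m) (W k ?m) (Vx X (V k) (?m-1)) (V ?o ?m)))\<^sup>2
            + (norm (layer_residual (sig (?m+1)) (W k (?m+1)) (V ?o ?m) (V ?o (?m+1))))\<^sup>2)"
      using hidden_step_min[OF k m, of "V ?o ?m"] by (simp add: algebra_simps)
    then show ?thesis unfolding U_upd lagr_update_hidden[OF m] U_m U_next Vx_m by simp
  next
    case False
    then have m: "?m = N - 1" using j by simp
    have U_upd': "U ?m = (U j)(N - 1 := V k (N-1))" and U_m': "U j (N-1) = V ?o (N-1)"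
      using U_upd U_m m by simp_all
    have Vx_m': "Vx X (U j) (N - 2) = Vx X (V k) (N - 2)" using Vx_m m by (simp add: numeral_2_eq_2)
    have square: "inner (Lam ?o) (WN k ** Z - VN ?o) + beta/2 * (norm (WN k ** Z - VN ?o))\<^sup>2
        = beta/2 * (norm (WN k ** Z - VN ?o + (1/beta) *\<^sub>R Lam ?o))\<^sup>2 - (norm (Lam ?o))\<^sup>2 / (2*beta)" for Z
      by (rule inner_add_norm_power2_complete_square[OF beta_pos])
    have "mu/2 * (norm (layer_residual (sig (N-1)) (W k (N-1)) (Vx X (V k) (N-2)) (V k (N-1))))\<^sup>2
          + inner (Lam ?o) (WN k ** V k (N-1) - VN ?o) + beta/2 * (norm (WN k ** V k (N-1) - VN ?o))\<^sup>2
        \<le> mu/2 * (norm (layer_residual (sig (N-1)) (W k (N-1)) (Vx X (V k) (N-2)) (V ?o (N-1))))\<^sup>2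
          + inner (Lam ?o) (WN k ** V ?o (N-1) - VN ?o) + beta/2 * (norm (WN k ** V ?o (N-1) - VN ?o))\<^sup>2"
      using last_hidden_step_min[OF k, of "V ?o (N-1)"] square[of "V k (N-1)"] square[of "V ?o (N-1)"]
      by linarith
    then show ?thesis unfolding U_upd' lagr_update_last_hidden[OF N3] U_m' Vx_m' by linarith
  qed
qed

lemma lagr_hidden_steps_decrease:
  assumes k: "k \<ge> 1"
  shows "Lag (W k) (WN k) (V k) (VN (k-1)) (Lam (k-1)) \<le> Lag (W k) (WN k) (V (k-1)) (VN (k-1)) (Lam (k-1))"
proof -
  define U where "U j = (\<lambda>i. if i \<le> j then V k i else V (k-1) i)" for j
  let ?F = "\<lambda>Vf. Lag (W k) (WN k) Vf (VN (k-1)) (Lam (k-1))"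
  have "?F (U j) \<le> ?F (U 0)" if "j \<le> N - 1" for j
    using that
  proof (induction j)
    case (Suc j)
    then show ?case using lagr_hidden_sweep_step[OF k, of j] unfolding U_def by simp
  qed simp
  moreover have "?F (U 0) = ?F (V (k-1))" and "?F (U (N-1)) = ?F (V k)"
    using N3 by (auto intro!: lagr_cong_hidden simp: U_def)
  ultimately show ?thesis by fastforce
qed

lemma lagr_output_step_decrease:
  assumes k: "k \<ge> 1"
  shows "Lag (W k) (WN k) (V k) (VN k) (Lam (k-1)) + (1+beta)/2 * (norm (VN (k-1) - VN k))\<^sup>2
       = Lag (W k) (WN k) (V k) (VN (k-1)) (Lam (k-1))"
  using lagr_update_output[of X Y N lam mu beta sig "W k" "WN k" "V k" "VN (k-1)" "Lam (k-1)" "VN k"]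
    output_step_decrease[OF output_step[OF k], of "VN (k-1)"] by simp

lemma lagr_multiplier_step_increase:
  assumes k: "k \<ge> 1"
  shows "Lag_at k = Lag (W k) (WN k) (V k) (VN k) (Lam (k-1)) + (norm (Lam k - Lam (k-1)))\<^sup>2 / beta"
proof -
  have "inner (Lam k) (WN k ** V k (N-1) - VN k) - inner (Lam (k-1)) (WN k ** V k (N-1) - VN k)
      = (norm (Lam k - Lam (k-1)))\<^sup>2 / beta"
    unfolding constraint_residual_eq[OF k] using beta_pos
    by (simp add: inner_diff_left diff_divide_distrib power2_norm_eq_inner)
  then show ?thesis
    using lagr_update_multiplier[of X Y N lam mu beta sig "W k" "WN k" "V k" "VN k" "Lam k" "Lam (k-1)"]
    by simp
qed

text \<open>From the second iteration on, the multiplier increase is paid for by the output step,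
  because Lam k - Lam (k - 1) = VN k - VN (k - 1) and 1/beta < (1 + beta)/2.\<close>

lemma lagr_iterates_decrease:
  assumes k: "k \<ge> 2"
  shows "Lag_at k \<le> Lag_at (k-1)"
proof -
  have k1: "k \<ge> 1" "k - 1 \<ge> 1" using k by auto
  let ?d = "(norm (VN (k-1) - VN k))\<^sup>2"
  have "Lam k - Lam (k-1) = - (VN (k-1) - VN k)"
    using multiplier_eq_output_error[OF k1(1)] multiplier_eq_output_error[OF k1(2)] by simp
  then have "(norm (Lam k - Lam (k-1)))\<^sup>2 / beta = ?d / beta" by (simp only: norm_minus_cancel)
  also have "\<dots> \<le> ?d" using beta by (simp add: divide_le_eq mult_le_cancel_left1)
  also have "\<dots> \<le> (1+beta)/2 * ?d" using mult_right_mono[of 1 "(1+beta)/2" ?d] beta by simp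
  finally show ?thesis
    using lagr_multiplier_step_increase[OF k1(1)] lagr_output_step_decrease[OF k1(1)]
      lagr_hidden_steps_decrease[OF k1(1)] lagr_weight_steps_decrease[OF k1(1)]
    by linarith
qed

lemma lagr_iterate_le_first:
  assumes "k \<ge> 1"
  shows "Lag_at k \<le> Lag_at 1"
  using assms
proof (induction k rule: dec_induct)
  case (step k)
  then show ?case using lagr_iterates_decrease[of "Suc k"] by simp
qed simp

subsection \<open>Boundedness of the iterates\<close>

lemma lagr_iterate_lower_bound:
  assumes k: "k \<ge> 1"
  shows "(beta-1)/beta/2 * (norm (Lam k))\<^sup>2 + lam/2 * (\<Sum>i=1..N-1. (norm (W k i))\<^sup>2) + lam/2 * (norm (WN k))\<^sup>2
      + mu/2 * (\<Sum>i=1..N-1. (norm (layer_residual (sig i) (W k i) (Vx X (V k) (i-1)) (V k i)))\<^sup>2)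
    \<le> Lag_at k"
proof -
  have "Lag_at k = 1/2 * (norm (Lam k))\<^sup>2 + lam/2 * (\<Sum>i=1..N-1. (norm (W k i))\<^sup>2) + lam/2 * (norm (WN k))\<^sup>2
      + mu/2 * (\<Sum>i=1..N-1. (norm (layer_residual (sig i) (W k i) (Vx X (V k) (i-1)) (V k i)))\<^sup>2)
      + (inner (Lam k) (WN k ** V k (N-1) - VN k) + beta/2 * (norm (WN k ** V k (N-1) - VN k))\<^sup>2)"
    unfolding lagr_eq_layer_residual multiplier_eq_output_error[OF k, symmetric] by (simp add: algebra_simps)
  moreover have "inner (Lam k) (WN k ** V k (N-1) - VN k) + beta/2 * (norm (WN k ** V k (N-1) - VN k))\<^sup>2
      \<ge> - (norm (Lam k))\<^sup>2 / (2*beta)"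
    using inner_add_norm_power2_complete_square[OF beta_pos, of "Lam k" "WN k ** V k (N-1) - VN k"]
      beta_pos by (simp add: divide_le_eq)
  moreover have "(beta-1)/beta/2 * (norm (Lam k))\<^sup>2 = 1/2 * (norm (Lam k))\<^sup>2 - (norm (Lam k))\<^sup>2 / (2*beta)"
    using beta_pos by (simp add: field_simps)
  ultimately show ?thesis by linarith
qed

lemma iterate_terms_le_first:
  assumes k: "k \<ge> 1"
  shows "i \<in> {1..N-1} \<Longrightarrow> lam/2 * (norm (W k i))\<^sup>2 \<le> Lag_at 1"
    and "lam/2 * (norm (WN k))\<^sup>2 \<le> Lag_at 1"
    and "(beta-1)/beta/2 * (norm (Lam k))\<^sup>2 \<le> Lag_at 1"
    and "i \<in> {1..N-1} \<Longrightarrow> mu/2 * (norm (layer_residual (sig i) (W k i) (Vx X (V k) (i-1)) (V k i)))\<^sup>2 \<le> Lag_at 1"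
proof -
  let ?SW = "\<Sum>i=1..N-1. (norm (W k i))\<^sup>2"
  let ?SR = "\<Sum>i=1..N-1. (norm (layer_residual (sig i) (W k i) (Vx X (V k) (i-1)) (V k i)))\<^sup>2"
  have nonneg: "0 \<le> (beta-1)/beta/2 * (norm (Lam k))\<^sup>2" "0 \<le> lam/2 * ?SW"
    "0 \<le> lam/2 * (norm (WN k))\<^sup>2" "0 \<le> mu/2 * ?SR"
    using beta lam mu by (auto intro!: sum_nonneg mult_nonneg_nonneg)
  note total = lagr_iterate_lower_bound[OF k] lagr_iterate_le_first[OF k]
  show "lam/2 * (norm (WN k))\<^sup>2 \<le> Lag_at 1" and "(beta-1)/beta/2 * (norm (Lam k))\<^sup>2 \<le> Lag_at 1"
    using nonneg total by linarith+
  show "lam/2 * (norm (W k i))\<^sup>2 \<le> Lag_at 1" if "i \<in> {1..N-1}"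
  proof -
    have "(norm (W k i))\<^sup>2 \<le> ?SW" by (rule member_le_sum) (use that in auto)
    then have "lam/2 * (norm (W k i))\<^sup>2 \<le> lam/2 * ?SW" using lam by simp
    then show ?thesis using nonneg total by linarith
  qed
  show "mu/2 * (norm (layer_residual (sig i) (W k i) (Vx X (V k) (i-1)) (V k i)))\<^sup>2 \<le> Lag_at 1"
    if "i \<in> {1..N-1}"
  proof -
    have "(norm (layer_residual (sig i) (W k i) (Vx X (V k) (i-1)) (V k i)))\<^sup>2 \<le> ?SR"
      by (rule member_le_sum) (use that in auto)
    then have "mu/2 * (norm (layer_residual (sig i) (W k i) (Vx X (V k) (i-1)) (V k i)))\<^sup>2 \<le> mu/2 * ?SR"
      using mu by simp
    then show ?thesis using nonneg total by linarith
  qed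
qed

lemma norm_layer_input_le:
  assumes k: "k \<ge> 1"
  shows "j \<le> N - 1 \<Longrightarrow> norm (Vx X (V k) j) \<le> norm X + real j * (real (CARD('d) * CARD('n)) * psi0 + (1 + 2 * Lag_at 1 / mu))"
    (is "_ \<Longrightarrow> _ \<le> _ + _ * ?c")
proof (induction j)
  case (Suc j)
  have i: "Suc j \<in> {1..N-1}" using Suc by auto
  have "norm (layer_residual (sig (Suc j)) (W k (Suc j)) (Vx X (V k) j) (V k (Suc j))) \<le> 1 + 2 * Lag_at 1 / mu"
    using le_one_add_of_scaled_power2_le[OF mu iterate_terms_le_first(4)[OF k i]] by simp
  moreover have "norm (ew (sig (Suc j)) (W k (Suc j) ** Vx X (V k) j)) \<le> real (CARD('d) * CARD('n)) * psi0"
    by (rule norm_ew_le) (use sig_bound i in auto)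
  moreover have "norm (Vx X (V k) (Suc j)) \<le> norm (Vx X (V k) j) + norm (ew (sig (Suc j)) (W k (Suc j) ** Vx X (V k) j))
      + norm (layer_residual (sig (Suc j)) (W k (Suc j)) (Vx X (V k) j) (V k (Suc j)))"
  proof -
    let ?A = "Vx X (V k) j" and ?E = "ew (sig (Suc j)) (W k (Suc j) ** Vx X (V k) j)"
      and ?R = "layer_residual (sig (Suc j)) (W k (Suc j)) (Vx X (V k) j) (V k (Suc j))"
    have "Vx X (V k) (Suc j) = ?A + ?E - ?R" by (simp add: layer_residual_def Vx_def)
    then show ?thesis using norm_triangle_ineq4[of "?A + ?E" ?R] norm_triangle_ineq[of ?A ?E] by simp
  qed
  ultimately have "norm (Vx X (V k) (Suc j)) \<le> norm (Vx X (V k) j) + real (CARD('d) * CARD('n)) * psi0 + (1 + 2 * Lag_at 1 / mu)"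
    by linarith
  moreover have "real (Suc j) * ?c = real j * ?c + ?c" by (simp add: distrib_right)
  ultimately show ?case using Suc by linarith
qed (simp add: Vx_def)

definition iterate_bounded_by :: "real \<Rightarrow> nat \<Rightarrow> bool" where
  "iterate_bounded_by B k \<longleftrightarrow> (\<forall>i\<in>{1..N-1}. norm (W k i) \<le> B \<and> norm (V k i) \<le> B)
      \<and> norm (WN k) \<le> B \<and> norm (VN k) \<le> B \<and> norm (Lam k) \<le> B"

lemma iterate_bounded_by_mono: "iterate_bounded_by B k \<Longrightarrow> B \<le> B' \<Longrightarrow> iterate_bounded_by B' k"
  unfolding iterate_bounded_by_def by (meson order_trans)

lemma iterates_bounded_after_first: "\<exists>B \<ge> norm X. \<forall>k\<ge>1. iterate_bounded_by B k"
proof -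
  define c where "c = real (CARD('d) * CARD('n)) * psi0 + (1 + 2 * Lag_at 1 / mu)"
  define B where "B = (1 + 2 * Lag_at 1 / lam) + (1 + 2 * Lag_at 1 / ((beta-1)/beta)) + norm Y
      + (norm X + real N * c)"
  have "0 \<le> lam/2 * (norm (WN 1))\<^sup>2" using lam by simp
  then have "0 \<le> Lag_at 1" using iterate_terms_le_first(2)[of 1] by simp
  then have nonneg: "0 \<le> 2 * Lag_at 1 / lam" "0 \<le> 2 * Lag_at 1 / ((beta-1)/beta)" "0 \<le> real N * c"
    using lam beta mu psi_nonneg unfolding c_def by auto
  have "iterate_bounded_by B k" if k: "k \<ge> 1" for k
  proof -
    have W: "norm (W k i) \<le> 1 + 2 * Lag_at 1 / lam" if "i \<in> {1..N-1}" for i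
      by (rule le_one_add_of_scaled_power2_le[OF lam iterate_terms_le_first(1)[OF k that]])
    have WN: "norm (WN k) \<le> 1 + 2 * Lag_at 1 / lam"
      by (rule le_one_add_of_scaled_power2_le[OF lam iterate_terms_le_first(2)[OF k]])
    have Lam: "norm (Lam k) \<le> 1 + 2 * Lag_at 1 / ((beta-1)/beta)"
      by (rule le_one_add_of_scaled_power2_le[OF _ iterate_terms_le_first(3)[OF k]]) (use beta in simp)
    have V: "norm (V k i) \<le> norm X + real N * c" if "i \<in> {1..N-1}" for i
    proof -
      have "norm (V k i) \<le> norm X + real i * c"
        using norm_layer_input_le[OF k, of i] that unfolding c_def by (simp add: Vx_def)
      also have "\<dots> \<le> norm X + real N * c"
        using that nonneg(3) by (auto intro: mult_right_mono simp: zero_le_mult_iff)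
      finally show ?thesis .
    qed
    have "norm (VN k) \<le> norm (Lam k) + norm Y"
      using multiplier_eq_output_error[OF k] norm_triangle_ineq[of "Lam k" Y] by simp
    moreover have "1 + 2 * Lag_at 1 / lam \<le> B" and "norm (Lam k) + norm Y \<le> B" and "norm X + real N * c \<le> B"
      using Lam nonneg norm_ge_zero[of X] norm_ge_zero[of Y] unfolding B_def by linarith+
    ultimately have "norm (WN k) \<le> B" "norm (VN k) \<le> B" "norm (Lam k) \<le> B"
      using WN norm_ge_zero[of Y] by linarith+
    moreover have "norm (W k i) \<le> B" "norm (V k i) \<le> B" if "i \<in> {1..N-1}" for i
      using W[OF that] V[OF that] \<open>1 + 2 * Lag_at 1 / lam \<le> B\<close> \<open>norm X + real N * c \<le> B\<close>
      by linarith+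
    ultimately show ?thesis unfolding iterate_bounded_by_def by blast
  qed
  moreover have "norm X \<le> B" using nonneg unfolding B_def by simp
  ultimately show ?thesis by blast
qed

lemma iterates_bounded: "\<exists>B. norm X \<le> B \<and> (\<forall>k. iterate_bounded_by B k)"
proof -
  obtain B1 where "norm X \<le> B1" and later: "\<And>k. k \<ge> 1 \<Longrightarrow> iterate_bounded_by B1 k"
    using iterates_bounded_after_first by blast
  define B0 where "B0 = (\<Sum>i=1..N-1. norm (W 0 i) + norm (V 0 i)) + norm (WN 0) + norm (VN 0) + norm (Lam 0)"
  let ?S = "\<Sum>i=1..N-1. norm (W 0 i) + norm (V 0 i)"
  have S: "0 \<le> ?S" by (auto intro!: sum_nonneg)
  have "norm (WN 0) \<le> B0" "norm (VN 0) \<le> B0" "norm (Lam 0) \<le> B0"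
    using S norm_ge_zero[of "WN 0"] norm_ge_zero[of "VN 0"] norm_ge_zero[of "Lam 0"]
    unfolding B0_def by linarith+
  moreover have "norm (W 0 i) \<le> B0" "norm (V 0 i) \<le> B0" if "i \<in> {1..N-1}" for i
  proof -
    have "norm (W 0 i) + norm (V 0 i) \<le> ?S" by (rule member_le_sum) (use that in auto)
    then show "norm (W 0 i) \<le> B0" "norm (V 0 i) \<le> B0"
      using norm_ge_zero[of "W 0 i"] norm_ge_zero[of "V 0 i"] norm_ge_zero[of "WN 0"]
        norm_ge_zero[of "VN 0"] norm_ge_zero[of "Lam 0"]
      unfolding B0_def by linarith+
  qed
  ultimately have "iterate_bounded_by B0 0" unfolding iterate_bounded_by_def by blast
  moreover have "0 \<le> B0" "0 \<le> B1"
    using \<open>norm (WN 0) \<le> B0\<close> \<open>norm X \<le> B1\<close> norm_ge_zero[of "WN 0"] norm_ge_zero[of X] by linarith+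
  ultimately have "iterate_bounded_by (B1 + B0) k" for k
    using later[of k] iterate_bounded_by_mono by (cases "k = 0") auto
  then show ?thesis using \<open>norm X \<le> B1\<close> \<open>0 \<le> B0\<close> by (intro exI[of _ "B1 + B0"]) auto
qed

end

section \<open>Relative error of bounded iterates\<close>

locale admm2s_bounded = admm2s X Y N lam mu beta psi0 psi1 psi2 sig om nu om_min om_max nu_min nu_max W WN V VN Lam
  for X :: "real^'n^'d" and Y :: "real^'n^'q"
    and N :: nat and lam mu beta psi0 psi1 psi2 :: real
    and sig :: "nat \<Rightarrow> real \<Rightarrow> real"
    and om nu :: "nat \<Rightarrow> nat \<Rightarrow> real"
    and om_min om_max nu_min nu_max :: "nat \<Rightarrow> real"
    and W :: "nat \<Rightarrow> nat \<Rightarrow> real^'d^'d" and WN :: "nat \<Rightarrow> real^'d^'q"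
    and V :: "nat \<Rightarrow> nat \<Rightarrow> real^'n^'d" and VN Lam :: "nat \<Rightarrow> real^'n^'q" +
  fixes B :: real
  assumes norm_X_le: "norm X \<le> B"
    and norm_W_le: "i \<in> {1..N-1} \<Longrightarrow> norm (W k i) \<le> B"
    and norm_V_le: "i \<in> {1..N-1} \<Longrightarrow> norm (V k i) \<le> B"
    and norm_WN_le: "norm (WN k) \<le> B"
    and norm_VN_le: "norm (VN k) \<le> B"
    and norm_Lam_le: "norm (Lam k) \<le> B"
begin

lemma B_nonneg: "0 \<le> B"
  using norm_X_le norm_ge_zero order_trans by blast

lemma norm_Vx_le: "j \<le> N - 1 \<Longrightarrow> norm (Vx X (V k) j) \<le> B"
  using norm_V_le[of j k] norm_X_le by (cases "j = 0") (auto simp: Vx_def)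

text \<open>By the first-order condition of a block step, the block gradient of the Lagrangian at the
  new iterate equals the derivative of the Lagrangian minus that of the subproblem objective.\<close>

lemma weight_step_gap_le:
  assumes k: "k \<ge> 1" and i: "i \<in> {1..N-1}"
  shows "\<bar>mu * (inner (layer_residual (sig i) (W k i) (Vx X (V k) (i-1)) (V k i))
                   (ew_deriv (sig i) (W k i ** Vx X (V k) (i-1)) (h ** Vx X (V k) (i-1)))
              - inner (layer_residual (sig i) (W k i) (Vx X (V (k-1)) (i-1)) (V (k-1) i))
                   (ew_deriv (sig i) (W k i ** Vx X (V (k-1)) (i-1)) (h ** Vx X (V (k-1)) (i-1))))
           - om i (k-1) * inner (W k i - W (k-1) i) h\<bar>
         \<le> (mu * ((2 + psi1*B) * (psi1*B) + (2*B + real (CARD('d) * CARD('n)) * psi0) * (psi2*B*B + psi1))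
             + om_max i) * step_diff k * norm h"
    (is "\<bar>mu * (?x - ?y) - ?prox\<bar> \<le> (mu * ?K + _) * ?D * _")
proof -
  let ?o = "k - 1" and ?A = "Vx X (V k) (i-1)" and ?Ao = "Vx X (V (k-1)) (i-1)"
  have "norm (layer_residual (sig i) (W k i) ?Ao (V ?o i)) \<le> norm ?Ao + real (CARD('d) * CARD('n)) * psi0 + norm (V ?o i)"
    by (rule norm_layer_residual_le) (use sig_bound i in auto)
  moreover have "norm ?Ao \<le> B" and A: "norm ?A \<le> B" by (rule norm_Vx_le, use i in auto)+
  ultimately have R': "norm (layer_residual (sig i) (W k i) ?Ao (V ?o i)) \<le> 2*B + real (CARD('d) * CARD('n)) * psi0"
    using norm_V_le[OF i, of ?o] by linarith
  have dA: "norm (?A - ?Ao) \<le> ?D" by (rule step_diff_ge_layer_input) (use i in auto)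
  have "\<bar>?x - ?y\<bar> \<le> ?K * ?D * norm h"
    by (rule layer_residual_weight_deriv_diff_le[OF sig_lipschitz[OF i] _ sig_deriv_lipschitz[OF i]
          psi_nonneg(3) norm_W_le[OF i] A dA step_diff_ge_hidden[OF i] R'])
       (use sig_deriv_bound i in auto)
  then have "\<bar>mu * (?x - ?y)\<bar> \<le> mu * (?K * ?D * norm h)" using mu by (simp add: abs_mult)
  moreover have "\<bar>inner (W k i - W ?o i) h\<bar> \<le> ?D * norm h"
    using Cauchy_Schwarz_ineq2[of "W k i - W ?o i" h] step_diff_ge_weight[OF i]
    by (meson mult_right_mono norm_ge_zero order_trans)
  then have "\<bar>?prox\<bar> \<le> om_max i * (?D * norm h)"
    using mult_mono[OF om_bounded(2)[OF i] _ om_bounded(3)[OF i] abs_ge_zero] om_bounded(1)[OF i]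
    by (simp add: abs_mult)
  ultimately show ?thesis
    using abs_triangle_ineq4[of "mu * (?x - ?y)" ?prox] by (simp add: algebra_simps)
qed

lemma norm_grad_weight_le:
  assumes k: "k \<ge> 1" and i: "i \<in> {1..N-1}"
  shows "norm (grad_of (\<lambda>Z. Lag ((W k)(i := Z)) (WN k) (V k) (VN k) (Lam k)) (W k i))
    \<le> (mu * ((2 + psi1*B) * (psi1*B) + (2*B + real (CARD('d) * CARD('n)) * psi0) * (psi2*B*B + psi1))
        + om_max i) * step_diff k"
proof -
  let ?o = "k - 1" and ?s = "sig i" and ?Wc = "W k i"
  let ?A = "Vx X (V k) (i-1)" and ?Ao = "Vx X (V ?o) (i-1)"
  have s': "\<And>x. (?s has_real_derivative deriv ?s x) (at x)" using sig_has_deriv[OF i] .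
  have T: "((\<lambda>Z. lam/2 * (norm Z)\<^sup>2 + mu/2 * (norm (layer_residual ?s Z ?A (V k i)))\<^sup>2) has_derivative
      (\<lambda>h. lam * inner ?Wc h + mu * inner (layer_residual ?s ?Wc ?A (V k i)) (ew_deriv ?s (?Wc ** ?A) (h ** ?A))))
      (at ?Wc)"
    by (rule has_derivative_add[OF has_derivative_scaled_norm_power2[OF has_derivative_ident]
          has_derivative_scaled_norm_power2[OF has_derivative_layer_residual_weight[OF s']]])
  have G: "((\<lambda>Z. lam/2 * (norm Z)\<^sup>2 + mu/2 * (norm (layer_residual ?s Z ?Ao (V ?o i)))\<^sup>2
        + om i ?o/2 * (norm (Z - W ?o i))\<^sup>2) has_derivative
      (\<lambda>h. lam * inner ?Wc h + mu * inner (layer_residual ?s ?Wc ?Ao (V ?o i)) (ew_deriv ?s (?Wc ** ?Ao) (h ** ?Ao))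
        + om i ?o * inner (?Wc - W ?o i) (h - 0))) (at ?Wc)"
    by (rule has_derivative_add[OF has_derivative_add[OF has_derivative_scaled_norm_power2[OF has_derivative_ident]
          has_derivative_scaled_norm_power2[OF has_derivative_layer_residual_weight[OF s']]]
          has_derivative_scaled_norm_power2[OF has_derivative_diff[OF has_derivative_ident has_derivative_const]]])
  show ?thesis
  proof (rule norm_grad_of_le_at_minimizer[OF _ T G weight_step_min[OF k i]])
    show "Lag ((W k)(i := Z)) (WN k) (V k) (VN k) (Lam k)
        = (Lag_at k - (lam/2 * (norm ?Wc)\<^sup>2 + mu/2 * (norm (layer_residual ?s ?Wc ?A (V k i)))\<^sup>2))
          + (lam/2 * (norm Z)\<^sup>2 + mu/2 * (norm (layer_residual ?s Z ?A (V k i)))\<^sup>2)" for Z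
      unfolding lagr_update_weight[OF i] by simp
    show "0 \<le> (mu * ((2 + psi1*B) * (psi1*B) + (2*B + real (CARD('d) * CARD('n)) * psi0) * (psi2*B*B + psi1))
        + om_max i) * step_diff k"
      using mu psi_nonneg B_nonneg om_bounded(3)[OF i] step_diff_nonneg by simp
  qed (use weight_step_gap_le[OF k i] in \<open>simp add: algebra_simps\<close>)
qed

lemma output_weight_step_gap_le:
  assumes k: "k \<ge> 1"
  shows "\<bar>inner (Lam k + beta *\<^sub>R (WN k ** V k (N-1) - VN k)) (h ** V k (N-1))
          - inner (beta *\<^sub>R (WN k ** V (k-1) (N-1) - VN (k-1)) + Lam (k-1)) (h ** V (k-1) (N-1))\<bar>
         \<le> ((1 + beta*B + beta) * B + (beta * (B*B + B) + B)) * step_diff k * norm h"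
    (is "\<bar>inner ?E (h ** ?P) - inner ?Eo (h ** ?Po)\<bar> \<le> _")
proof -
  let ?o = "k - 1" and ?Wn = "WN k" and ?D = "step_diff k"
  have N1: "N - 1 \<in> {1..N-1}" using N3 by auto
  have dP: "norm (?P - ?Po) \<le> ?D" by (rule step_diff_ge_hidden[OF N1])
  have E_diff: "?E - ?Eo = (Lam k - Lam ?o) + beta *\<^sub>R (?Wn ** (?P - ?Po)) - beta *\<^sub>R (VN k - VN ?o)"
    by (simp add: matrix_diff_ldistrib algebra_simps)
  have "norm (?E - ?Eo) \<le> norm (Lam k - Lam ?o) + norm (beta *\<^sub>R (?Wn ** (?P - ?Po))) + norm (beta *\<^sub>R (VN k - VN ?o))"
    using norm_triangle_ineq4[of "Lam k - Lam ?o + beta *\<^sub>R (?Wn ** (?P - ?Po))" "beta *\<^sub>R (VN k - VN ?o)"]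
      norm_triangle_ineq[of "Lam k - Lam ?o" "beta *\<^sub>R (?Wn ** (?P - ?Po))"]
    unfolding E_diff by linarith
  also have "\<dots> \<le> ?D + beta * (B * ?D) + beta * ?D"
    using step_diff_ge_multiplier step_diff_ge_output norm_matrix_mult_le_mult[OF norm_WN_le dP] beta_pos
    by (intro add_mono) (auto intro: mult_left_mono)
  finally have "norm (?E - ?Eo) \<le> (1 + beta*B + beta) * ?D" by (simp add: algebra_simps)
  then have "\<bar>inner (?E - ?Eo) (h ** ?P)\<bar> \<le> ((1 + beta*B + beta) * ?D) * (norm h * B)"
    by (rule order_trans[OF Cauchy_Schwarz_ineq2 mult_mono[OF _ norm_matrix_mult_le_mult[OF order_refl norm_V_le[OF N1]]]])
       (use beta_pos B_nonneg step_diff_nonneg in auto)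
  moreover have "norm (?Wn ** ?Po - VN ?o) \<le> B * B + B"
    using norm_triangle_ineq4[of "?Wn ** ?Po" "VN ?o"] norm_matrix_mult_le_mult[OF norm_WN_le[of k] norm_V_le[OF N1, of ?o]]
      norm_VN_le[of ?o] by linarith
  then have "norm (beta *\<^sub>R (?Wn ** ?Po - VN ?o)) \<le> beta * (B * B + B)"
    using beta_pos by (simp add: mult_left_mono)
  then have "norm ?Eo \<le> beta * (B*B + B) + B"
    using norm_triangle_ineq[of "beta *\<^sub>R (?Wn ** ?Po - VN ?o)" "Lam ?o"] norm_Lam_le[of ?o] by linarith
  then have "\<bar>inner ?Eo (h ** (?P - ?Po))\<bar> \<le> (beta * (B*B + B) + B) * (norm h * ?D)"
    by (rule order_trans[OF Cauchy_Schwarz_ineq2 mult_mono[OF _ norm_matrix_mult_le_mult[OF order_refl dP]]])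
       (use beta_pos B_nonneg in auto)
  moreover have "inner ?E (h ** ?P) - inner ?Eo (h ** ?Po) = inner (?E - ?Eo) (h ** ?P) + inner ?Eo (h ** (?P - ?Po))"
    by (simp add: inner_diff_left inner_diff_right matrix_diff_ldistrib)
  ultimately have "\<bar>inner ?E (h ** ?P) - inner ?Eo (h ** ?Po)\<bar>
      \<le> ((1 + beta*B + beta) * ?D) * (norm h * B) + (beta * (B*B + B) + B) * (norm h * ?D)"
    using abs_triangle_ineq[of "inner (?E - ?Eo) (h ** ?P)" "inner ?Eo (h ** (?P - ?Po))"] by simp
  also have "\<dots> = ((1 + beta*B + beta) * B + (beta * (B*B + B) + B)) * ?D * norm h"
    by (simp add: algebra_simps)
  finally show ?thesis .
qed

lemma norm_grad_output_weight_le: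
  assumes k: "k \<ge> 1"
  shows "norm (grad_of (\<lambda>Z. Lag (W k) Z (V k) (VN k) (Lam k)) (WN k))
    \<le> ((1 + beta*B + beta) * B + (beta * (B*B + B) + B)) * step_diff k"
proof -
  let ?o = "k - 1" and ?P = "V k (N-1)" and ?Po = "V (k-1) (N-1)" and ?Wn = "WN k"
  have lin: "((\<lambda>Z. Z ** P - C) has_derivative (\<lambda>h. h ** P - 0)) (at ?Wn)" for P :: "real^'n^'d" and C
    by (rule has_derivative_diff[OF bounded_linear_imp_has_derivative[OF bounded_linear_matrix_mult_right]
          has_derivative_const])
  have T: "((\<lambda>Z. lam/2 * (norm Z)\<^sup>2 + inner (Lam k) (Z ** ?P - VN k) + beta/2 * (norm (Z ** ?P - VN k))\<^sup>2)
      has_derivative (\<lambda>h. lam * inner ?Wn h + inner (Lam k) (h ** ?P - 0) + beta * inner (?Wn ** ?P - VN k) (h ** ?P - 0)))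
      (at ?Wn)"
    by (rule has_derivative_add[OF has_derivative_add[OF has_derivative_scaled_norm_power2[OF has_derivative_ident]
          has_derivative_inner_right[OF lin]] has_derivative_scaled_norm_power2[OF lin]])
  have G: "((\<lambda>Z. lam/2 * (norm Z)\<^sup>2 + beta/2 * (norm (Z ** ?Po - VN ?o + (1/beta) *\<^sub>R Lam ?o))\<^sup>2)
      has_derivative (\<lambda>h. lam * inner ?Wn h + beta * inner (?Wn ** ?Po - VN ?o + (1/beta) *\<^sub>R Lam ?o) (h ** ?Po - 0 + 0)))
      (at ?Wn)"
    by (rule has_derivative_add[OF has_derivative_scaled_norm_power2[OF has_derivative_ident]
          has_derivative_scaled_norm_power2[OF has_derivative_add[OF lin has_derivative_const]]])
  have "beta * inner (?Wn ** ?Po - VN ?o + (1/beta) *\<^sub>R Lam ?o) H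
      = inner (beta *\<^sub>R (?Wn ** ?Po - VN ?o) + Lam ?o) H" for H
    using beta_pos by (simp add: inner_add_left algebra_simps)
  then have gap: "(lam * inner ?Wn h + inner (Lam k) (h ** ?P - 0) + beta * inner (?Wn ** ?P - VN k) (h ** ?P - 0))
      - (lam * inner ?Wn h + beta * inner (?Wn ** ?Po - VN ?o + (1/beta) *\<^sub>R Lam ?o) (h ** ?Po - 0 + 0))
      = inner (Lam k + beta *\<^sub>R (?Wn ** ?P - VN k)) (h ** ?P)
        - inner (beta *\<^sub>R (?Wn ** ?Po - VN ?o) + Lam ?o) (h ** ?Po)" for h
    by (simp add: inner_add_left)
  show ?thesis
  proof (rule norm_grad_of_le_at_minimizer[OF _ T G output_weight_step_min[OF k]])
    show "Lag (W k) Z (V k) (VN k) (Lam k) = (Lag_at k - (lam/2 * (norm ?Wn)\<^sup>2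
        + inner (Lam k) (?Wn ** ?P - VN k) + beta/2 * (norm (?Wn ** ?P - VN k))\<^sup>2))
        + (lam/2 * (norm Z)\<^sup>2 + inner (Lam k) (Z ** ?P - VN k) + beta/2 * (norm (Z ** ?P - VN k))\<^sup>2)" for Z
      unfolding lagr_update_output_weight[of X Y N lam mu beta sig "W k" Z "V k" "VN k" "Lam k" ?Wn] by simp
    show "0 \<le> ((1 + beta*B + beta) * B + (beta * (B*B + B) + B)) * step_diff k"
      using B_nonneg beta_pos step_diff_nonneg by simp
  qed (simp only: gap output_weight_step_gap_le[OF k])
qed

lemma hidden_step_gap_le:
  assumes k: "k \<ge> 1" and i: "i \<in> {1..N-2}"
  shows "\<bar>mu * inner (V (k-1) (i+1) - V k (i+1)) (h + ew_deriv (sig (i+1)) (W k (i+1) ** V k i) (W k (i+1) ** h))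
           - nu i (k-1) * inner (V k i - V (k-1) i) h\<bar>
         \<le> (mu * (1 + psi1*B) + nu_max i) * step_diff k * norm h"
    (is "\<bar>mu * inner ?dV (h + ?e) - ?prox\<bar> \<le> _ * ?D * _")
proof -
  have i1: "i \<in> {1..N-1}" and i2: "i + 1 \<in> {1..N-1}" using i by auto
  have "norm ?e \<le> psi1 * norm (W k (i+1) ** h)"
    by (rule norm_ew_deriv_le) (use sig_deriv_bound i2 in auto)
  also have "\<dots> \<le> psi1 * (B * norm h)"
    using norm_matrix_mult_le_mult[OF norm_W_le[OF i2] order_refl] psi_nonneg by (intro mult_left_mono) auto
  finally have "norm (h + ?e) \<le> (1 + psi1*B) * norm h"
    using norm_triangle_ineq[of h ?e] by (simp add: algebra_simps)
  then have "\<bar>inner ?dV (h + ?e)\<bar> \<le> ?D * ((1 + psi1*B) * norm h)"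
    using step_diff_ge_hidden[OF i2, of k] step_diff_nonneg
    by (intro order_trans[OF Cauchy_Schwarz_ineq2 mult_mono]) (auto simp: norm_minus_commute)
  then have "\<bar>mu * inner ?dV (h + ?e)\<bar> \<le> mu * (?D * ((1 + psi1*B) * norm h))"
    using mu by (simp add: abs_mult)
  moreover have "\<bar>inner (V k i - V (k-1) i) h\<bar> \<le> ?D * norm h"
    using step_diff_ge_hidden[OF i1, of k]
    by (intro order_trans[OF Cauchy_Schwarz_ineq2 mult_right_mono]) auto
  then have "\<bar>?prox\<bar> \<le> nu_max i * (?D * norm h)"
    using mult_mono[OF nu_bounded(2)[OF i] _ nu_bounded(3)[OF i] abs_ge_zero] nu_bounded(1)[OF i]
    by (simp add: abs_mult)
  moreover have "(mu * (1 + psi1*B) + nu_max i) * ?D * norm h = mu * (?D * ((1 + psi1*B) * norm h)) + nu_max i * (?D * norm h)"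
    by (simp add: algebra_simps)
  ultimately show ?thesis
    using abs_triangle_ineq4[of "mu * inner ?dV (h + ?e)" ?prox] by linarith
qed

lemma norm_grad_hidden_le:
  assumes k: "k \<ge> 1" and i: "i \<in> {1..N-2}"
  shows "norm (grad_of (\<lambda>Z. Lag (W k) (WN k) ((V k)(i := Z)) (VN k) (Lam k)) (V k i))
    \<le> (mu * (1 + psi1*B) + nu_max i) * step_diff k"
proof -
  let ?o = "k - 1" and ?A = "Vx X (V k) (i-1)" and ?W2 = "W k (i+1)" and ?s2 = "sig (i+1)" and ?Vi = "V k i"
  let ?r1 = "layer_residual (sig i) (W k i) ?A ?Vi"
  let ?d = "\<lambda>h. h + ew_deriv ?s2 (?W2 ** ?Vi) (?W2 ** h)"
  have input: "((\<lambda>Z. layer_residual ?s2 ?W2 Z C) has_derivative ?d) (at ?Vi)" for C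
    by (rule has_derivative_layer_residual_input[OF sig_has_deriv]) (use i in auto)
  have T: "((\<lambda>Z. mu/2 * (norm (layer_residual (sig i) (W k i) ?A Z))\<^sup>2
        + mu/2 * (norm (layer_residual ?s2 ?W2 Z (V k (i+1))))\<^sup>2) has_derivative
      (\<lambda>h. mu * inner ?r1 (0 - h) + mu * inner (layer_residual ?s2 ?W2 ?Vi (V k (i+1))) (?d h))) (at ?Vi)"
    by (rule has_derivative_add[OF has_derivative_scaled_norm_power2[OF has_derivative_layer_residual_target]
          has_derivative_scaled_norm_power2[OF input]])
  have G: "((\<lambda>Z. mu/2 * (norm (layer_residual (sig i) (W k i) ?A Z))\<^sup>2
        + mu/2 * (norm (layer_residual ?s2 ?W2 Z (V ?o (i+1))))\<^sup>2 + nu i ?o / 2 * (norm (Z - V ?o i))\<^sup>2)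
      has_derivative (\<lambda>h. mu * inner ?r1 (0 - h) + mu * inner (layer_residual ?s2 ?W2 ?Vi (V ?o (i+1))) (?d h)
        + nu i ?o * inner (?Vi - V ?o i) (h - 0))) (at ?Vi)"
    by (rule has_derivative_add[OF has_derivative_add[OF
          has_derivative_scaled_norm_power2[OF has_derivative_layer_residual_target]
          has_derivative_scaled_norm_power2[OF input]]
          has_derivative_scaled_norm_power2[OF has_derivative_diff[OF has_derivative_ident has_derivative_const]]])
  have "inner (layer_residual ?s2 ?W2 ?Vi (V k (i+1))) (?d h) - inner (layer_residual ?s2 ?W2 ?Vi (V ?o (i+1))) (?d h)
      = inner (V ?o (i+1) - V k (i+1)) (?d h)" for h
    by (simp add: layer_residual_def inner_diff_left)
  then have gap: "(mu * inner ?r1 (0 - h) + mu * inner (layer_residual ?s2 ?W2 ?Vi (V k (i+1))) (?d h))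
      - (mu * inner ?r1 (0 - h) + mu * inner (layer_residual ?s2 ?W2 ?Vi (V ?o (i+1))) (?d h)
        + nu i ?o * inner (?Vi - V ?o i) (h - 0))
      = mu * inner (V ?o (i+1) - V k (i+1)) (?d h) - nu i ?o * inner (?Vi - V ?o i) h" for h
    by (simp add: right_diff_distrib[symmetric])
  show ?thesis
  proof (rule norm_grad_of_le_at_minimizer[OF _ T G hidden_step_min[OF k i]])
    show "Lag (W k) (WN k) ((V k)(i := Z)) (VN k) (Lam k)
        = (Lag_at k - mu/2 * ((norm ?r1)\<^sup>2 + (norm (layer_residual ?s2 ?W2 ?Vi (V k (i+1))))\<^sup>2))
          + (mu/2 * (norm (layer_residual (sig i) (W k i) ?A Z))\<^sup>2
             + mu/2 * (norm (layer_residual ?s2 ?W2 Z (V k (i+1))))\<^sup>2)" for Z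
      unfolding lagr_update_hidden[OF i] by (simp add: algebra_simps)
    show "0 \<le> (mu * (1 + psi1*B) + nu_max i) * step_diff k"
      using mu psi_nonneg B_nonneg nu_bounded(3)[OF i] step_diff_nonneg by simp
  qed (simp only: gap hidden_step_gap_le[OF k i])
qed

lemma last_hidden_step_gap_le:
  assumes k: "k \<ge> 1"
  shows "\<bar>inner ((Lam k - Lam (k-1)) - beta *\<^sub>R (VN k - VN (k-1))) (WN k ** h)\<bar> \<le> ((1 + beta) * B) * step_diff k * norm h"
proof -
  have "norm ((Lam k - Lam (k-1)) - beta *\<^sub>R (VN k - VN (k-1)))
      \<le> norm (Lam k - Lam (k-1)) + norm (beta *\<^sub>R (VN k - VN (k-1)))"
    by (rule norm_triangle_ineq4)
  also have "\<dots> \<le> step_diff k + beta * step_diff k"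
    using add_mono[OF step_diff_ge_multiplier[of k] mult_left_mono[OF step_diff_ge_output[of k], of beta]]
      beta_pos by simp
  finally have "norm ((Lam k - Lam (k-1)) - beta *\<^sub>R (VN k - VN (k-1))) \<le> (1 + beta) * step_diff k"
    by (simp add: algebra_simps)
  then have "\<bar>inner ((Lam k - Lam (k-1)) - beta *\<^sub>R (VN k - VN (k-1))) (WN k ** h)\<bar>
      \<le> ((1 + beta) * step_diff k) * (B * norm h)"
    by (rule order_trans[OF Cauchy_Schwarz_ineq2 mult_mono[OF _ norm_matrix_mult_le_mult[OF norm_WN_le order_refl]]])
       (use beta_pos step_diff_nonneg in auto)
  then show ?thesis by (simp add: algebra_simps)
qed

lemma norm_grad_last_hidden_le:
  assumes k: "k \<ge> 1"
  shows "norm (grad_of (\<lambda>Z. Lag (W k) (WN k) ((V k)(N-1 := Z)) (VN k) (Lam k)) (V k (N-1)))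
    \<le> ((1 + beta) * B) * step_diff k"
proof -
  let ?o = "k - 1" and ?A = "Vx X (V k) (N-2)" and ?Vl = "V k (N-1)" and ?Wn = "WN k"
  let ?r = "layer_residual (sig (N-1)) (W k (N-1)) ?A ?Vl"
  have lin: "((\<lambda>Z. ?Wn ** Z - C) has_derivative (\<lambda>h. ?Wn ** h - 0)) (at ?Vl)" for C
    by (rule has_derivative_diff[OF bounded_linear_imp_has_derivative[OF bounded_linear_matrix_mult_left]
          has_derivative_const])
  have T: "((\<lambda>Z. mu/2 * (norm (layer_residual (sig (N-1)) (W k (N-1)) ?A Z))\<^sup>2
        + inner (Lam k) (?Wn ** Z - VN k) + beta/2 * (norm (?Wn ** Z - VN k))\<^sup>2) has_derivative
      (\<lambda>h. mu * inner ?r (0 - h) + inner (Lam k) (?Wn ** h - 0) + beta * inner (?Wn ** ?Vl - VN k) (?Wn ** h - 0)))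
      (at ?Vl)"
    by (rule has_derivative_add[OF has_derivative_add[OF
          has_derivative_scaled_norm_power2[OF has_derivative_layer_residual_target]
          has_derivative_inner_right[OF lin]] has_derivative_scaled_norm_power2[OF lin]])
  have G: "((\<lambda>Z. mu/2 * (norm (layer_residual (sig (N-1)) (W k (N-1)) ?A Z))\<^sup>2
        + beta/2 * (norm (?Wn ** Z - VN ?o + (1/beta) *\<^sub>R Lam ?o))\<^sup>2) has_derivative
      (\<lambda>h. mu * inner ?r (0 - h) + beta * inner (?Wn ** ?Vl - VN ?o + (1/beta) *\<^sub>R Lam ?o) (?Wn ** h - 0 + 0)))
      (at ?Vl)"
    by (rule has_derivative_add[OF has_derivative_scaled_norm_power2[OF has_derivative_layer_residual_target]
          has_derivative_scaled_norm_power2[OF has_derivative_add[OF lin has_derivative_const]]])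
  have gap: "(mu * inner ?r (0 - h) + inner (Lam k) (?Wn ** h - 0) + beta * inner (?Wn ** ?Vl - VN k) (?Wn ** h - 0))
      - (mu * inner ?r (0 - h) + beta * inner (?Wn ** ?Vl - VN ?o + (1/beta) *\<^sub>R Lam ?o) (?Wn ** h - 0 + 0))
      = inner ((Lam k - Lam ?o) - beta *\<^sub>R (VN k - VN ?o)) (?Wn ** h)" for h
    using beta_pos by (simp add: inner_diff_left inner_add_left algebra_simps)
  show ?thesis
  proof (rule norm_grad_of_le_at_minimizer[OF _ T G last_hidden_step_min[OF k]])
    show "Lag (W k) (WN k) ((V k)(N-1 := Z)) (VN k) (Lam k)
        = (Lag_at k - (mu/2 * (norm ?r)\<^sup>2 + inner (Lam k) (?Wn ** ?Vl - VN k) + beta/2 * (norm (?Wn ** ?Vl - VN k))\<^sup>2))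
          + (mu/2 * (norm (layer_residual (sig (N-1)) (W k (N-1)) ?A Z))\<^sup>2
             + inner (Lam k) (?Wn ** Z - VN k) + beta/2 * (norm (?Wn ** Z - VN k))\<^sup>2)" for Z
      unfolding lagr_update_last_hidden[OF N3] by simp
    show "0 \<le> ((1 + beta) * B) * step_diff k" using beta_pos B_nonneg step_diff_nonneg by simp
  qed (simp only: gap last_hidden_step_gap_le[OF k])
qed

lemma norm_grad_output_le:
  assumes k: "k \<ge> 1"
  shows "norm (grad_of (\<lambda>Z. Lag (W k) (WN k) (V k) Z (Lam k)) (VN k)) \<le> step_diff k"
proof -
  let ?P = "WN k ** V k (N-1)" and ?Vn = "VN k"
  have T: "((\<lambda>Z. 1/2 * (norm (Z - Y))\<^sup>2 + inner (Lam k) (?P - Z) + beta/2 * (norm (?P - Z))\<^sup>2) has_derivative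
      (\<lambda>h. 1 * inner (?Vn - Y) (h - 0) + inner (Lam k) (0 - h) + beta * inner (?P - ?Vn) (0 - h))) (at ?Vn)"
    by (rule has_derivative_add[OF has_derivative_add[OF
          has_derivative_scaled_norm_power2[OF has_derivative_diff[OF has_derivative_ident has_derivative_const]]
          has_derivative_inner_right[OF has_derivative_diff[OF has_derivative_const has_derivative_ident]]]
          has_derivative_scaled_norm_power2[OF has_derivative_diff[OF has_derivative_const has_derivative_ident]]])
  \<comment> \<open>by steps (e) and (f) the derivative collapses to the multiplier increment\<close>
  have T'_eq: "1 * inner (?Vn - Y) (h - 0) + inner (Lam k) (0 - h) + beta * inner (?P - ?Vn) (0 - h)
      = - inner (Lam k - Lam (k-1)) h" for h
    using multiplier_eq_output_error[OF k] constraint_residual_eq[OF k] beta_pos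
    by (simp add: inner_diff_right)
  have bound: "\<bar>inner (Lam k - Lam (k-1)) h\<bar> \<le> step_diff k * norm h" for h
    using step_diff_ge_multiplier[of k] by (intro order_trans[OF Cauchy_Schwarz_ineq2 mult_right_mono]) auto
  show ?thesis
  proof (rule norm_grad_of_le[OF _ T step_diff_nonneg])
    show "Lag (W k) (WN k) (V k) Z (Lam k) = (Lag_at k - (1/2 * (norm (?Vn - Y))\<^sup>2
        + inner (Lam k) (?P - ?Vn) + beta/2 * (norm (?P - ?Vn))\<^sup>2))
        + (1/2 * (norm (Z - Y))\<^sup>2 + inner (Lam k) (?P - Z) + beta/2 * (norm (?P - Z))\<^sup>2)" for Z
      unfolding lagr_update_output[of X Y N lam mu beta sig "W k" "WN k" "V k" Z "Lam k" ?Vn] by simp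
  qed (simp only: T'_eq abs_minus_cancel bound)
qed

lemma norm_grad_multiplier_le:
  assumes k: "k \<ge> 1"
  shows "norm (grad_of (\<lambda>Z. Lag (W k) (WN k) (V k) (VN k) Z) (Lam k)) \<le> step_diff k"
proof -
  let ?e = "WN k ** V k (N-1) - VN k"
  have "norm ?e = norm (Lam k - Lam (k-1)) / beta"
    unfolding constraint_residual_eq[OF k] using beta_pos by simp
  also have "\<dots> \<le> norm (Lam k - Lam (k-1))"
    using beta by (simp add: divide_le_eq mult_le_cancel_left1)
  finally have "norm ?e \<le> step_diff k" using step_diff_ge_multiplier[of k] by linarith
  then have "\<bar>inner h ?e\<bar> \<le> step_diff k * norm h" for h
    by (intro order_trans[OF Cauchy_Schwarz_ineq2]) (simp add: mult.commute mult_left_mono)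
  then show ?thesis
  proof (intro norm_grad_of_le[OF _ bounded_linear_imp_has_derivative[OF bounded_linear_inner_left]
        step_diff_nonneg])
    show "Lag (W k) (WN k) (V k) (VN k) Z = (Lag_at k - inner (Lam k) ?e) + inner Z ?e" for Z
      unfolding lagr_update_multiplier[of X Y N lam mu beta sig "W k" "WN k" "V k" "VN k" Z "Lam k"] by simp
  qed
qed

lemma relative_error_bound:
  "\<exists>C>0. \<forall>k\<ge>1. lagr_grad_norm X Y N lam mu beta sig (W k) (WN k) (V k) (VN k) (Lam k) \<le> C * step_diff k"
proof -
  let ?K = "mu * ((2 + psi1*B) * (psi1*B) + (2*B + real (CARD('d) * CARD('n)) * psi0) * (psi2*B*B + psi1))"
  let ?Kn = "(1 + beta*B + beta) * B + (beta * (B*B + B) + B)"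
  let ?Om = "\<Sum>i=1..N-1. om_max i" and ?Nu = "\<Sum>i=1..N-2. nu_max i"
  define C where "C = ?K + ?Om + ?Kn + (mu * (1 + psi1*B) + ?Nu) + (1 + beta) * B + 1"
  have "0 \<le> ?Om" "0 \<le> ?Nu" using om_bounded(3) nu_bounded(3) by (auto intro!: sum_nonneg)
  moreover have "0 \<le> ?K" "0 \<le> ?Kn" "0 \<le> mu * (1 + psi1*B)" "0 \<le> (1 + beta) * B"
    using mu psi_nonneg B_nonneg beta_pos by auto
  moreover have "om_max i \<le> ?Om" if "i \<in> {1..N-1}" for i
    using that om_bounded(3) by (intro member_le_sum) auto
  moreover have "nu_max i \<le> ?Nu" if "i \<in> {1..N-2}" for i
    using that nu_bounded(3) by (intro member_le_sum) auto
  ultimately have le_C: "\<And>i. i \<in> {1..N-1} \<Longrightarrow> ?K + om_max i \<le> C" "?Kn \<le> C"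
    "\<And>i. i \<in> {1..N-2} \<Longrightarrow> mu * (1 + psi1*B) + nu_max i \<le> C" "(1 + beta) * B \<le> C" "1 \<le> C"
    unfolding C_def by (smt (verit))+
  have scale: "x \<le> C * step_diff k" if "x \<le> a * step_diff k" "a \<le> C" for x a k
    using that mult_right_mono[OF that(2) step_diff_nonneg[of k]] by linarith
  have "lagr_grad_norm X Y N lam mu beta sig (W k) (WN k) (V k) (VN k) (Lam k) \<le> real (2*N+1) * (C * step_diff k)"
    if k: "k \<ge> 1" for k
  proof (rule lagr_grad_norm_le)
    show "N \<ge> 1" using N3 by simp
    show "norm (grad_of (\<lambda>Z. Lag (W k) (WN k) ((V k)(i := Z)) (VN k) (Lam k)) (V k i)) \<le> C * step_diff k"
      if "i \<in> {1..N-1}" for i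
    proof (cases "i \<le> N - 2")
      case True
      then have "i \<in> {1..N-2}" using that by auto
      then show ?thesis using scale[OF norm_grad_hidden_le[OF k] le_C(3)] by simp
    next
      case False
      then have "i = N - 1" using that by auto
      then show ?thesis using scale[OF norm_grad_last_hidden_le[OF k] le_C(4)] by simp
    qed
  qed (use scale[OF norm_grad_weight_le[OF k] le_C(1)] scale[OF norm_grad_output_weight_le[OF k] le_C(2)]
      scale[of _ 1, OF _ le_C(5)] norm_grad_output_le[OF k] norm_grad_multiplier_le[OF k]
      le_C(5) step_diff_nonneg in auto)
  moreover have "0 < real (2*N+1) * C" using le_C(5) by simp
  ultimately show ?thesis by (intro exI[of _ "real (2*N+1) * C"]) (simp add: mult.assoc)
qed

end

context admm2s
begin

lemma relative_error:
  "\<exists>C>0. \<forall>k\<ge>1. lagr_grad_norm X Y N lam mu beta sig (W k) (WN k) (V k) (VN k) (Lam k) \<le> C * step_diff k"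
proof -
  obtain B where "norm X \<le> B" and "\<And>k. iterate_bounded_by B k"
    using iterates_bounded by blast
  interpret admm2s_bounded X Y N lam mu beta psi0 psi1 psi2 sig om nu om_min om_max nu_min nu_max W WN V VN Lam B
    by unfold_locales (use \<open>norm X \<le> B\<close> \<open>\<And>k. iterate_bounded_by B k\<close> in \<open>auto simp: iterate_bounded_by_def\<close>)
  show ?thesis by (rule relative_error_bound)
qed

end

theorem mainTheorem7:
  fixes X :: "real^'n^'d" and Y :: "real^'n^'q"
    and N :: nat and lam mu beta psi0 psi1 psi2 :: real
    and sig :: "nat \<Rightarrow> real \<Rightarrow> real"
    and om nu :: "nat \<Rightarrow> nat \<Rightarrow> real"
    and om_min om_max nu_min nu_max :: "nat \<Rightarrow> real"
    and W :: "nat \<Rightarrow> nat \<Rightarrow> real^'d^'d" and WN :: "nat \<Rightarrow> real^'d^'q"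
    and V :: "nat \<Rightarrow> nat \<Rightarrow> real^'n^'d" and VN Lam :: "nat \<Rightarrow> real^'n^'q"
  assumes "N \<ge> 3" and "lam > 0" and "mu > 0" and "beta > 1"
    and "\<forall>i\<in>{1..N-1}. real_analytic (sig i)"
    and "\<forall>i\<in>{1..N-1}. \<forall>x. \<bar>sig i x\<bar> \<le> psi0"
    and "\<forall>i\<in>{1..N-1}. \<forall>x. \<bar>deriv (sig i) x\<bar> \<le> psi1"
    and "\<forall>i\<in>{1..N-1}. \<forall>x. \<bar>deriv (deriv (sig i)) x\<bar> \<le> psi2"
    and "\<forall>i\<in>{1..N-1}. \<forall>k. 0 < om_min i \<and> om_min i \<le> om i k \<and> om i k \<le> om_max i"
    and "\<forall>i\<in>{1..N-2}. \<forall>k. 0 < nu_min i \<and> nu_min i \<le> nu i k \<and> nu i k \<le> nu_max i"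
    and "admm2s_iterates X Y N lam mu beta sig om nu W WN V VN Lam"
  shows "\<exists>C2>0. \<forall>k\<ge>1.
           lagr_grad_norm X Y N lam mu beta sig (W k) (WN k) (V k) (VN k) (Lam k)
             \<le> C2 * iter_diff_norm N W WN V VN Lam k"
proof -
  interpret admm2s X Y N lam mu beta psi0 psi1 psi2 sig om nu om_min om_max nu_min nu_max W WN V VN Lam
    using assms by unfold_locales
  show ?thesis by (rule relative_error)
qed

end
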